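(* Let $\rho\colon\mathrm{Isom}(\mathbf H^1_{\mathbb C})_o\to\mathrm{Isom}(\mathbf H^\infty_{\mathbb C})_o$ be irreducible, with $\eta_1,\eta_2,E,\langle\cdot,\cdot\rangle$ as in the context, and let $\rho\colon P\to U(B)$ also denote a continuous homomorphic lift of $\rho|_P$ normalized so that $B(\rho(g(\lambda,b))\eta_1,\eta_2)>0$ for all $\lambda>0,b\in\mathbb R$. Then there is a continuous isomorphism $\chi\colon\mathbb R_{>0}\to\mathbb R_{>0}$ such that for all $\lambda>0$, $b\in\mathbb R$, with respect to $\mathbb C\eta_1\oplus\mathbb C\eta_2\oplus E$, $$\rho(g(\lambda,b))=\begin{pmatrix}\chi(\lambda)&-\chi(\lambda)|c(\lambda,b)|^2/2+i\Delta(\lambda,b)&-\chi(\lambda)\langle\pi(\lambda,b)(\cdot),c(\lambda,b)\rangle\\0&\chi(\lambda)^{-1}&0\\0&c(\lambda,b)&\pi(\lambda,b)\end{pmatrix},$$ where, writing $\Delta(b)=\Delta(1,b)$, $c(b)=c(1,b)$, $\pi(b)=\pi(1,b)$, for all $\lambda>0$, $b,d\in\mathbb R$: (1) $\Delta(\lambda,b)\in\mathbb R$ and $(\lambda,b)\mapsto\Delta(\lambda,b)$ is continuous; (2) $c(\lambda,b)\in E$ and $g(\lambda,b)\mapsto c(\lambda,b)$ is continuous; (3) $\pi(\lambda,b)$ is unitary on $E$ and $g(\lambda,b)\mapsto\pi(\lambda,b)$ is a strongly continuous unitary representation of $P$; (4) $c(b+d)=c(b)+\pi(b)c(d)$; (5)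 $\Delta(\lambda,0)=0$ and $c(\lambda,0)=0$; (6) $\chi(\lambda)\pi(\lambda,0)c(b)=c(\lambda^2b)$; (7) $\chi(\lambda)^2\Delta(b)=\Delta(\lambda^2b)$; (8) $\Delta(-b)=-\Delta(b)$; (9) $\mathrm{Im}\langle c(d),c(b)\rangle=\Delta(d-b)-\Delta(d)+\Delta(b)$; (10) $\mathrm{Re}\langle c(d),c(b)\rangle=-\tfrac{|c(d-b)|^2}{2}+\tfrac{|c(b)|^2}{2}+\tfrac{|c(d)|^2}{2}$.
   Context: $\mathcal H$ is a separable complex Hilbert space with a strongly non-degenerate Hermitian form $B$ (linear in the first variable) of signature $(1,\infty)$; $\mathbf H^\infty_{\mathbb C}=\{[v]:B(v,v)>0\}$, $\cosh d([v],[w])=|B(v,w)|/\sqrt{B(v,v)B(w,w)}$, boundary = isotropic lines, $\mathrm{Isom}(\mathbf H^\infty_{\mathbb C})_o=PU(B)$. $\mathbf H^1_{\mathbb C}$: $\mathbb C^2$ with $B(z,w)=z_1\bar w_1-z_2\bar w_2$, $\xi_1=(e_1+e_2)/\sqrt2$, $\xi_2=(e_1-e_2)/\sqrt2$; $g(\lambda,b)\in SU(1,1)$ has matrix $\begin{pmatrix}\lambda&ib\\0&\lambda^{-1}\end{pmatrix}$ in basis $(\xi_1,\xi_2)$, $P=\{g(\lambda,b):\lambda>0,b\in\mathbb R\}$, identified with its image in $PU(1,1)=\mathrm{Isom}(\mathbf H^1_{\mathbb C})_o$. Representations are orbitally continuous homomorphisms; irreducible = no fixed point in $\mathbf H^\infty_{\mathbb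 C}\cup\partial\mathbf H^\infty_{\mathbb C}$, no invariant pair of boundary points, and no proper invariant complex hyperbolic subspace (projectivization of a closed complex subspace of signature $(1,m')$). For such $\rho$, $\rho(P)$ fixes a unique $\eta_1\in\partial\mathbf H^\infty_{\mathbb C}$ and $\eta_2$ denotes the other endpoint of the common axis of the hyperbolic isometries $\rho(g(\lambda,0))$, $\lambda\ne1$; fix isotropic representatives (same names) with $B(\eta_1,\eta_2)=1$, let $E=\eta_1^\perp\cap\eta_2^\perp$, $\langle u,v\rangle:=B(u,v)$ for $u,v\in E$ and $|u|^2:=\langle u,u\rangle$. *)

theory Defs
  imports "HOL-Analysis.Analysis"
begin

class cvector = real_vector +
  fixes cscale :: "complex \<Rightarrow> 'a \<Rightarrow> 'a"  (infixr \<open>*\<^sub>C\<close> 75)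
  assumes cscale_add_right: "a *\<^sub>C (x + y) = a *\<^sub>C x + a *\<^sub>C y"
    and cscale_add_left: "(a + b) *\<^sub>C x = a *\<^sub>C x + b *\<^sub>C x"
    and cscale_cscale: "a *\<^sub>C (b *\<^sub>C x) = (a * b) *\<^sub>C x"
    and cscale_one: "1 *\<^sub>C x = x"
    and scaleR_cscale: "scaleR r x = complex_of_real r *\<^sub>C x"

class cnormed_vector = cvector + real_normed_vector +
  assumes norm_cscale: "norm (a *\<^sub>C x) = cmod a * norm x"

definition hermitian_form :: "('h::cvector \<Rightarrow> 'h \<Rightarrow> complex) \<Rightarrow> bool" where
  "hermitian_form B \<longleftrightarrow>
     (\<forall>x y z. B (x + y) z = B x z + B y z) \<and>
     (\<forall>a x y. B (a *\<^sub>C x) y = a * B x y) \<and>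
     (\<forall>x y. B x y = cnj (B y x))"

text \<open>Norm attached to a fundamental decomposition
  H = C e0 (+) e0^perp (B positive on C e0, negative definite on e0^perp).\<close>
definition Jnorm :: "('h::cvector \<Rightarrow> 'h \<Rightarrow> complex) \<Rightarrow> 'h \<Rightarrow> 'h \<Rightarrow> real" where
  "Jnorm B e0 v =
     (let w = v - B v e0 *\<^sub>C e0 in sqrt ((cmod (B v e0))\<^sup>2 - Re (B w w)))"

text \<open>(H,B) is a separable complex Hilbert space (the type 'h, complete normed,
  separable) and B is a strongly non-degenerate Hermitian form of signature (1,infinity):
  there is a fundamental decomposition H = C e0 (+) e0^perp with B(e0,e0)=1,
  B negative definite on e0^perp, of infinite negative index, and whose
  associated Hilbert norm defines the topology of H.\<close>
definition sig_1_infty_form :: "('h::{cnormed_vector,banach} \<Rightarrow> 'h \<Rightarrow> complex) \<Rightarrow> bool" where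
  "sig_1_infty_form B \<longleftrightarrow>
     hermitian_form B \<and>
     (\<exists>D::'h set. countable D \<and> closure D = UNIV) \<and>
     (\<exists>e0. B e0 e0 = 1 \<and>
        (\<forall>v. B v e0 = 0 \<longrightarrow> v \<noteq> 0 \<longrightarrow> Re (B v v) < 0) \<and>
        (\<exists>K>0. \<forall>v. norm v \<le> K * Jnorm B e0 v \<and> Jnorm B e0 v \<le> K * norm v)) \<and>
     (\<forall>n. \<exists>f::nat \<Rightarrow> 'h. \<forall>i<n. \<forall>j<n. B (f i) (f j) = (if i = j then -1 else 0))"

definition cline :: "'h::cvector \<Rightarrow> 'h set" where
  "cline v = range (\<lambda>a. a *\<^sub>C v)"

definition unitaryB :: "('h::cvector \<Rightarrow> 'h \<Rightarrow> complex) \<Rightarrow> ('h \<Rightarrow> 'h) \<Rightarrow> bool" where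
  "unitaryB B T \<longleftrightarrow>
     (\<forall>x y. T (x + y) = T x + T y) \<and> (\<forall>a x. T (a *\<^sub>C x) = a *\<^sub>C T x) \<and>
     bij T \<and> (\<forall>x y. B (T x) (T y) = B x y)"

definition unitary_on :: "('h::cvector \<Rightarrow> 'h \<Rightarrow> complex) \<Rightarrow> 'h set \<Rightarrow> ('h \<Rightarrow> 'h) \<Rightarrow> bool" where
  "unitary_on B E T \<longleftrightarrow>
     (\<forall>x\<in>E. \<forall>y\<in>E. T (x + y) = T x + T y) \<and> (\<forall>a. \<forall>x\<in>E. T (a *\<^sub>C x) = a *\<^sub>C T x) \<and>
     bij_betw T E E \<and> (\<forall>x\<in>E. \<forall>y\<in>E. B (T x) (T y) = B x y)"

definition hdist :: "('h::cvector \<Rightarrow> 'h \<Rightarrow> complex) \<Rightarrow> 'h \<Rightarrow> 'h \<Rightarrow> real" where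
  "hdist B v w = arcosh (cmod (B v w) / sqrt (Re (B v v) * Re (B w w)))"

text \<open>Closed complex subspace containing a positive vector: its projectivization
  is a complex hyperbolic subspace (signature (1,m')).\<close>
definition hyp_subspace :: "('h::{cnormed_vector} \<Rightarrow> 'h \<Rightarrow> complex) \<Rightarrow> 'h set \<Rightarrow> bool" where
  "hyp_subspace B W \<longleftrightarrow>
     0 \<in> W \<and> (\<forall>x\<in>W. \<forall>y\<in>W. x + y \<in> W) \<and> (\<forall>a. \<forall>x\<in>W. a *\<^sub>C x \<in> W) \<and>
     closed W \<and> (\<exists>v\<in>W. Re (B v v) > 0)"

definition B11 :: "complex^2 \<Rightarrow> complex^2 \<Rightarrow> complex" where
  "B11 z w = z$1 * cnj (w$1) - z$2 * cnj (w$2)"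

definition SU11 :: "(complex^2^2) set" where
  "SU11 = {g. det g = 1 \<and> (\<forall>z w. B11 (g *v z) (g *v w) = B11 z w)}"

text \<open>Change of basis matrix: columns xi1 = (e1+e2)/sqrt 2, xi2 = (e1-e2)/sqrt 2
  (it is its own inverse).\<close>
definition Sxi :: "complex^2^2" where
  "Sxi = (1 / sqrt 2) *\<^sub>R vector [vector [1, 1], vector [1, -1]]"

text \<open>g(lambda,b): matrix (lambda, i b; 0, 1/lambda) in the basis (xi1, xi2).\<close>
definition gP :: "real \<Rightarrow> real \<Rightarrow> complex^2^2" where
  "gP l b = Sxi ** vector [vector [complex_of_real l, \<i> * complex_of_real b],
                           vector [0, complex_of_real (1 / l)]] ** Sxi"

definition Pgrp :: "(complex^2^2) set" where
  "Pgrp = {gP l b | l b. l > 0}"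

text \<open>A homomorphism rho : PU(1,1) = SU(1,1)/{+-1} -> PU(B) is described by a choice of
  lifts R g in U(B) of rho([g]) for g in SU(1,1): R is a projective homomorphism
  and R(-1) is a scalar.  Orbital continuity: for every x in H^infty, g -> rho(g) x is
  continuous for the hyperbolic metric.\<close>
definition proj_rep :: "('h::{cnormed_vector,banach} \<Rightarrow> 'h \<Rightarrow> complex) \<Rightarrow> (complex^2^2 \<Rightarrow> 'h \<Rightarrow> 'h) \<Rightarrow> bool" where
  "proj_rep B R \<longleftrightarrow>
     (\<forall>g\<in>SU11. unitaryB B (R g)) \<and>
     (\<forall>g\<in>SU11. \<forall>h\<in>SU11. \<exists>\<theta>. cmod \<theta> = 1 \<and> R (g ** h) = (\<lambda>v. \<theta> *\<^sub>C R g (R h v))) \<and>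
     (\<exists>\<theta>. cmod \<theta> = 1 \<and> R (- mat 1) = (\<lambda>v. \<theta> *\<^sub>C v)) \<and>
     (\<forall>v. Re (B v v) > 0 \<longrightarrow>
        (\<forall>g0\<in>SU11. ((\<lambda>g. hdist B (R g v) (R g0 v)) \<longlongrightarrow> 0) (at g0 within SU11)))"

text \<open>Irreducibility: no fixed point in H^infty or on its boundary, no invariant pair of
  boundary points, no proper invariant complex hyperbolic subspace.\<close>
definition irreducible_rep :: "('h::{cnormed_vector,banach} \<Rightarrow> 'h \<Rightarrow> complex) \<Rightarrow> (complex^2^2 \<Rightarrow> 'h \<Rightarrow> 'h) \<Rightarrow> bool" where
  "irreducible_rep B R \<longleftrightarrow>
     \<not> (\<exists>v. v \<noteq> 0 \<and> Re (B v v) \<ge> 0 \<and> (\<forall>g\<in>SU11. R g v \<in> cline v)) \<and>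
     \<not> (\<exists>v w. v \<noteq> 0 \<and> w \<noteq> 0 \<and> B v v = 0 \<and> B w w = 0 \<and> cline v \<noteq> cline w \<and>
          (\<forall>g\<in>SU11. (cline (R g v) = cline v \<and> cline (R g w) = cline w) \<or>
                     (cline (R g v) = cline w \<and> cline (R g w) = cline v))) \<and>
     \<not> (\<exists>W. hyp_subspace B W \<and> W \<noteq> UNIV \<and> (\<forall>g\<in>SU11. R g ` W \<subseteq> W))"

end

theory Submission
  imports Defs
begin

text \<open>The lift of g(\<lambda>,b) preserves the isotropic line C\<eta>1, and the normalisation makes the
  eigenvalue a positive real; it is multiplicative in g and, since g(2,0) conjugates g(1,b) to
  g(1,4b), trivial on the unipotent part, so it is a continuous character \<chi> of R_{>0}.
  Unitarity then pins down the \<eta>1-coordinates of the images of \<eta>2 and of the orthogonal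
  complement E of \<eta>1 and \<eta>2, and (4)--(10) are read off by comparing coordinates in the
  relations g(1,b) g(1,d) = g(1,b+d) and g(\<lambda>,0) g(1,b) g(\<lambda>,0)^-1 = g(1,\<lambda>^2 b).

  By Cauchy's functional equation \<chi>(\<lambda>) = \<lambda>^\<alpha>, and \<alpha> \<noteq> 0: otherwise the diagonal subgroup
  would fix the line of the positive vector \<eta>1 + \<eta>2. A scaling argument and the equality case
  of the reverse Cauchy-Schwarz inequality show that all of P would fix it, and its image under
  the Weyl element would then be a line fixed by all of SU(1,1), contradicting irreducibility.\<close>

section \<open>Hermitian forms of signature (1,\<infinity>)\<close>

context cvector
begin

lemma cscale_zero_left [simp]: "0 *\<^sub>C x = 0"
  using cscale_add_left[of 0 0 x] by simp

lemma cscale_zero_right [simp]: "a *\<^sub>C 0 = 0"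
  using cscale_add_right[of a 0 0] by simp

lemma cscale_minus_left: "(- a) *\<^sub>C x = - (a *\<^sub>C x)"
  using cscale_add_left[of "-a" a x] by (simp add: eq_neg_iff_add_eq_0)

lemma cscale_minus_right: "a *\<^sub>C (- x) = - (a *\<^sub>C x)"
  using cscale_add_right[of a "-x" x] by (simp add: eq_neg_iff_add_eq_0)

lemma cscale_diff_right: "a *\<^sub>C (x - y) = a *\<^sub>C x - a *\<^sub>C y"
  using cscale_add_right[of a x "-y"] by (simp add: cscale_minus_right)

lemma cscale_minus_one: "(-1) *\<^sub>C x = - x"
  by (simp add: cscale_minus_left cscale_one)

lemma cscale_eq_Re_Im: "a *\<^sub>C x = Re a *\<^sub>R x + Im a *\<^sub>R (\<i> *\<^sub>C x)"
proof -
  have "a *\<^sub>C x = (complex_of_real (Re a) + \<i> * complex_of_real (Im a)) *\<^sub>C x"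
    using complex_eq[of a] by argo
  then show ?thesis by (simp add: cscale_add_left scaleR_cscale cscale_cscale mult.commute)
qed

end

lemma continuous_on_cscale:
  fixes v :: "'a :: {cvector, real_normed_vector}"
  assumes "continuous_on S f"
  shows "continuous_on S (\<lambda>x. f x *\<^sub>C v)"
proof -
  have eq: "(\<lambda>x. f x *\<^sub>C v) = (\<lambda>x. Re (f x) *\<^sub>R v + Im (f x) *\<^sub>R (\<i> *\<^sub>C v))"
    by (rule ext) (rule cscale_eq_Re_Im)
  show ?thesis
    unfolding eq using assms by (intro continuous_intros)
qed

locale hermitian =
  fixes B :: "'h::cvector \<Rightarrow> 'h \<Rightarrow> complex"
  assumes hermitian: "hermitian_form B"
begin

lemma B_add_left: "B (x + y) z = B x z + B y z"
  using hermitian unfolding hermitian_form_def by blast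

lemma B_cscale_left: "B (a *\<^sub>C x) y = a * B x y"
  using hermitian unfolding hermitian_form_def by blast

lemma B_conj_sym: "B x y = cnj (B y x)"
  using hermitian unfolding hermitian_form_def by blast

lemma B_add_right: "B z (x + y) = B z x + B z y"
  using B_conj_sym[of z "x+y"] B_conj_sym[of z x] B_conj_sym[of z y] B_add_left[of x y z] by simp

lemma B_cscale_right: "B x (a *\<^sub>C y) = cnj a * B x y"
  using B_conj_sym[of x "a *\<^sub>C y"] B_conj_sym[of x y] B_cscale_left[of a y x] by simp

lemma B_minus_left: "B (- x) y = - B x y"
  using B_cscale_left[of "-1" x y] by (simp add: cscale_minus_one)

lemma B_minus_right: "B y (- x) = - B y x"
  using B_conj_sym[of y "-x"] B_conj_sym[of y x] B_minus_left[of x y] by simp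

lemma B_diff_left: "B (x - y) z = B x z - B y z"
  using B_add_left[of x "-y" z] B_minus_left[of y z] by simp

lemma B_diff_right: "B z (x - y) = B z x - B z y"
  using B_add_right[of z x "-y"] B_minus_right[of z y] by simp

lemma B_scaleR_left: "B (r *\<^sub>R x) y = of_real r * B x y"
  by (simp add: scaleR_cscale B_cscale_left)

lemma B_scaleR_right: "B y (r *\<^sub>R x) = of_real r * B y x"
  by (simp add: scaleR_cscale B_cscale_right)

lemma B_zero_left [simp]: "B 0 y = 0"
  using B_cscale_left[of 0 0 y] by simp

lemma B_zero_right [simp]: "B y 0 = 0"
  using B_conj_sym[of y 0] by simp

lemma B_self_real: "B x x = of_real (Re (B x x))"
  using B_conj_sym[of x x] by (simp add: complex_eq_iff)

lemma B_mult_B_swap: "B x y * B y x = of_real ((cmod (B x y))\<^sup>2)"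
  using B_conj_sym[of y x] by (simp add: complex_norm_square[symmetric] del: of_real_power)

lemmas B_simps = B_add_left B_add_right B_cscale_left B_cscale_right B_minus_left B_minus_right
  B_diff_left B_diff_right B_scaleR_left B_scaleR_right

end

lemma mult_add_mult_le_sqrt:
  fixes x y s t :: real
  shows "x * y + s * t \<le> sqrt (x\<^sup>2 + s\<^sup>2) * sqrt (y\<^sup>2 + t\<^sup>2)"
proof -
  have "0 \<le> (x * t - s * y)\<^sup>2" by simp
  then have "(x * y + s * t)\<^sup>2 \<le> (x\<^sup>2 + s\<^sup>2) * (y\<^sup>2 + t\<^sup>2)"
    by (simp add: power2_eq_square algebra_simps)
  then show ?thesis by (metis real_le_rsqrt real_sqrt_mult)
qed

locale fundamental_vector = hermitian B for B :: "'h::cvector \<Rightarrow> 'h \<Rightarrow> complex" +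
  fixes e0 :: 'h
  assumes e0_unit: "B e0 e0 = 1"
    and negative_on_perp: "\<And>v. B v e0 = 0 \<Longrightarrow> v \<noteq> 0 \<Longrightarrow> Re (B v v) < 0"
begin

lemma perp_e0: "B (v - B v e0 *\<^sub>C e0) e0 = 0"
  by (simp add: B_simps e0_unit)

lemma B_decomp: "B v w = B v e0 * cnj (B w e0) + B (v - B v e0 *\<^sub>C e0) (w - B w e0 *\<^sub>C e0)"
  using B_conj_sym[of e0 w] by (simp add: B_simps e0_unit algebra_simps)

lemma nonpos_on_perp: "B u e0 = 0 \<Longrightarrow> Re (B u u) \<le> 0"
  using negative_on_perp[of u] by (cases "u = 0") auto

lemma cauchy_schwarz_perp:
  assumes u: "B u e0 = 0" and v: "B v e0 = 0"
  shows "(cmod (B u v))\<^sup>2 \<le> Re (B u u) * Re (B v v)"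
proof (cases "v = 0")
  case False
  define r where "r = Re (B v v)"
  have r: "r < 0" using negative_on_perp[OF v False] unfolding r_def .
  define p where "p = B u v"
  define w where "w = u - (p / of_real r) *\<^sub>C v"
  have "Re (B w w) \<le> 0"
    by (rule nonpos_on_perp) (simp add: w_def B_simps u v)
  moreover have "B w w = B u u - of_real ((cmod p)\<^sup>2 / r)"
    using B_self_real[of v] B_conj_sym[of v u] r
    unfolding w_def p_def r_def
    by (simp add: B_simps field_simps complex_norm_square del: of_real_power)
  ultimately have "Re (B u u) \<le> (cmod p)\<^sup>2 / r" by simp
  then show ?thesis using r unfolding p_def r_def by (simp add: field_simps)
qed simp

lemma Jnorm_nonneg: "Jnorm B e0 v \<ge> 0"
  using order_trans[OF nonpos_on_perp[OF perp_e0, of v] zero_le_power2[of "cmod (B v e0)"]]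
  unfolding Jnorm_def Let_def by simp

lemma norm_B_le_Jnorm: "cmod (B v w) \<le> Jnorm B e0 v * Jnorm B e0 w"
proof -
  define v' w' where "v' = v - B v e0 *\<^sub>C e0" and "w' = w - B w e0 *\<^sub>C e0"
  define P Q where "P = - Re (B v' v')" and "Q = - Re (B w' w')"
  have P: "P \<ge> 0" and Q: "Q \<ge> 0"
    unfolding P_def Q_def v'_def w'_def using nonpos_on_perp[OF perp_e0] by (simp_all add: le_minus_iff)
  have "(cmod (B v' w'))\<^sup>2 \<le> P * Q"
    using cauchy_schwarz_perp[OF perp_e0 perp_e0] unfolding P_def Q_def v'_def w'_def by simp
  then have "cmod (B v' w') \<le> sqrt P * sqrt Q"
    by (metis real_le_rsqrt real_sqrt_mult)
  then have "cmod (B v w) \<le> cmod (B v e0) * cmod (B w e0) + sqrt P * sqrt Q"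
    using B_decomp[of v w] norm_triangle_ineq[of "B v e0 * cnj (B w e0)" "B v' w'"]
    unfolding v'_def w'_def by (simp add: norm_mult)
  also have "\<dots> \<le> sqrt ((cmod (B v e0))\<^sup>2 + (sqrt P)\<^sup>2) * sqrt ((cmod (B w e0))\<^sup>2 + (sqrt Q)\<^sup>2)"
    by (rule mult_add_mult_le_sqrt)
  also have "\<dots> = Jnorm B e0 v * Jnorm B e0 w"
    unfolding Jnorm_def Let_def using P Q unfolding P_def Q_def v'_def w'_def by simp
  finally show ?thesis .
qed

lemma orth_positive_eq_0:
  assumes x: "Re (B x x) > 0" and yx: "B y x = 0" and y: "Re (B y y) \<ge> 0"
  shows "y = 0"
proof -
  define a b where "a = B x e0" and "b = B y e0"
  define x' y' where "x' = x - a *\<^sub>C e0" and "y' = y - b *\<^sub>C e0"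
  define P Q where "P = - Re (B x' x')" and "Q = - Re (B y' y')"
  have x'e: "B x' e0 = 0" and y'e: "B y' e0 = 0"
    unfolding x'_def y'_def a_def b_def by (simp_all add: perp_e0)
  have P: "P \<ge> 0" and Q: "Q \<ge> 0"
    unfolding P_def Q_def using nonpos_on_perp[OF x'e] nonpos_on_perp[OF y'e] by simp_all
  have ax: "(cmod a)\<^sup>2 > P"
    using x B_decomp[of x x] unfolding P_def x'_def a_def b_def
    by (simp add: complex_norm_square[symmetric] del: of_real_power)
  have by': "(cmod b)\<^sup>2 \<ge> Q"
    using y B_decomp[of y y] unfolding Q_def y'_def a_def b_def
    by (simp add: complex_norm_square[symmetric] del: of_real_power)
  have "B y' x' = - (b * cnj a)"
    using yx B_decomp[of y x] unfolding a_def b_def x'_def y'_def by (simp add: add_eq_0_iff)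
  then have key: "(cmod b)\<^sup>2 * (cmod a)\<^sup>2 \<le> Q * P"
    using cauchy_schwarz_perp[OF y'e x'e] unfolding P_def Q_def
    by (simp add: norm_mult power_mult_distrib)
  \<comment> \<open>B has only one non-negative direction\<close>
  have "Q = 0"
  proof (rule ccontr)
    assume "Q \<noteq> 0"
    then have "Q * P < Q * (cmod a)\<^sup>2" using Q ax by simp
    also have "\<dots> \<le> (cmod b)\<^sup>2 * (cmod a)\<^sup>2" using by' by (simp add: mult_right_mono)
    finally show False using key by simp
  qed
  then have "y' = 0" using negative_on_perp[OF y'e] unfolding Q_def by fastforce
  moreover have "b = 0"
    using key \<open>Q = 0\<close> ax P by (auto simp: mult_le_0_iff)
  ultimately show ?thesis unfolding y'_def by simp
qed

lemma mem_cline_if_B_eq: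
  assumes y: "Re (B y y) > 0" and zz: "B z z = B y y" and zy: "cmod (B z y) = Re (B y y)"
  shows "z \<in> cline y"
proof -
  define s where "s = Re (B y y)"
  have s: "s > 0" and Byy: "B y y = of_real s"
    using y B_self_real[of y] unfolding s_def by simp_all
  define u where "u = z - (B z y / of_real s) *\<^sub>C y"
  have "B u y = 0"
    unfolding u_def using Byy s by (simp add: B_simps)
  moreover have "B u u = 0"
  proof -
    have "B u u = of_real s - of_real ((cmod (B z y))\<^sup>2) / of_real s"
      unfolding u_def using zz Byy s B_mult_B_swap[of z y] B_conj_sym[of y z]
      by (simp add: B_simps field_simps)
    then show ?thesis using zy s unfolding s_def by (simp add: power2_eq_square)
  qed
  ultimately have "u = 0" using orth_positive_eq_0[OF y] by simp
  then show ?thesis unfolding u_def cline_def by auto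
qed

end

lemma sig_1_infty_form_hermitian: "sig_1_infty_form B \<Longrightarrow> hermitian B"
  unfolding sig_1_infty_form_def hermitian_def by blast

lemma sig_1_infty_formE:
  assumes "sig_1_infty_form B"
  obtains e0 K where "fundamental_vector B e0" "\<And>v. Jnorm B e0 v \<le> K * norm v"
proof -
  have "hermitian B" and
    "\<exists>e0. B e0 e0 = 1 \<and> (\<forall>v. B v e0 = 0 \<longrightarrow> v \<noteq> 0 \<longrightarrow> Re (B v v) < 0) \<and>
       (\<exists>K>0. \<forall>v. norm v \<le> K * Jnorm B e0 v \<and> Jnorm B e0 v \<le> K * norm v)"
    using assms unfolding sig_1_infty_form_def hermitian_def by simp_all
  then obtain e0 K where "B e0 e0 = 1" "\<forall>v. B v e0 = 0 \<longrightarrow> v \<noteq> 0 \<longrightarrow> Re (B v v) < 0"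
    "\<forall>v. norm v \<le> K * Jnorm B e0 v \<and> Jnorm B e0 v \<le> K * norm v"
    by blast
  with \<open>hermitian B\<close> show thesis
    using that[of e0 K] unfolding fundamental_vector_def fundamental_vector_axioms_def
    by simp
qed

lemma bounded_linear_B_left:
  assumes "sig_1_infty_form B"
  shows "bounded_linear (\<lambda>v. B v w)"
proof -
  obtain e0 K where e0: "fundamental_vector B e0" and K: "\<And>v. Jnorm B e0 v \<le> K * norm v"
    using sig_1_infty_formE[OF assms] by blast
  interpret fundamental_vector B e0 by (rule e0)
  show ?thesis
  proof (rule bounded_linear_intro[where K = "K * Jnorm B e0 w"])
    show "B (x + y) w = B x w + B y w" for x y by (rule B_add_left)
    show "B (r *\<^sub>R x) w = r *\<^sub>R B x w" for r x by (simp add: B_scaleR_left scaleR_conv_of_real)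
    show "norm (B x w) \<le> norm x * (K * Jnorm B e0 w)" for x
      using norm_B_le_Jnorm[of x w] mult_right_mono[OF K Jnorm_nonneg, of x w]
      by (simp add: algebra_simps)
  qed
qed

lemma continuous_on_B_left:
  "sig_1_infty_form B \<Longrightarrow> continuous_on S f \<Longrightarrow> continuous_on S (\<lambda>x. B (f x) w)"
  using bounded_linear.continuous_on[OF bounded_linear_B_left] by blast

lemma sig_1_infty_form_mem_cline:
  assumes "sig_1_infty_form B" "Re (B y y) > 0" "B z z = B y y" "cmod (B z y) = Re (B y y)"
  shows "z \<in> cline y"
proof -
  obtain e0 K where "fundamental_vector B e0"
    using sig_1_infty_formE[OF assms(1)] by blast
  then show ?thesis
    using fundamental_vector.mem_cline_if_B_eq assms(2-4) by blast
qed

section \<open>Hyperbolic pairs\<close>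

locale hyperbolic_pair = hermitian B for B :: "'h::cvector \<Rightarrow> 'h \<Rightarrow> complex" +
  fixes \<eta>1 \<eta>2 :: 'h
  assumes eta1_isotropic: "B \<eta>1 \<eta>1 = 0"
    and eta2_isotropic: "B \<eta>2 \<eta>2 = 0"
    and B_eta1_eta2: "B \<eta>1 \<eta>2 = 1"
begin

lemma B_eta2_eta1: "B \<eta>2 \<eta>1 = 1"
  using B_conj_sym[of \<eta>2 \<eta>1] B_eta1_eta2 by simp

lemmas B_eta = eta1_isotropic eta2_isotropic B_eta1_eta2 B_eta2_eta1

definition eta_perp :: "'h set" where
  "eta_perp = {u. B u \<eta>1 = 0 \<and> B u \<eta>2 = 0}"

definition proj_perp :: "'h \<Rightarrow> 'h" where
  "proj_perp v = v - B v \<eta>2 *\<^sub>C \<eta>1 - B v \<eta>1 *\<^sub>C \<eta>2"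

lemma proj_perp_in: "proj_perp v \<in> eta_perp"
  unfolding eta_perp_def proj_perp_def by (simp add: B_simps B_eta)

lemma hyperbolic_decomp: "v = B v \<eta>2 *\<^sub>C \<eta>1 + B v \<eta>1 *\<^sub>C \<eta>2 + proj_perp v"
  unfolding proj_perp_def by simp

lemma proj_perp_id: "u \<in> eta_perp \<Longrightarrow> proj_perp u = u"
  unfolding proj_perp_def eta_perp_def by simp

lemma proj_perp_add: "proj_perp (x + y) = proj_perp x + proj_perp y"
  unfolding proj_perp_def by (simp add: B_simps cscale_add_left algebra_simps)

lemma proj_perp_cscale: "proj_perp (a *\<^sub>C x) = a *\<^sub>C proj_perp x"
  unfolding proj_perp_def by (simp add: B_simps cscale_diff_right cscale_cscale)

lemma proj_perp_diff: "proj_perp (x - y) = proj_perp x - proj_perp y"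
  using proj_perp_add[of x "-y"] proj_perp_cscale[of "-1" y] by (simp add: cscale_minus_one)

lemma proj_perp_eta1: "proj_perp (a *\<^sub>C \<eta>1) = 0"
  unfolding proj_perp_def by (simp add: B_simps B_eta)

lemma proj_perp_eta2: "proj_perp (a *\<^sub>C \<eta>2) = 0"
  unfolding proj_perp_def by (simp add: B_simps B_eta)

lemma B_hyperbolic_coords:
  assumes "e \<in> eta_perp" "e' \<in> eta_perp"
  shows "B (p *\<^sub>C \<eta>1 + q *\<^sub>C \<eta>2 + e) (p' *\<^sub>C \<eta>1 + q' *\<^sub>C \<eta>2 + e') =
           p * cnj q' + q * cnj p' + B e e'"
  using assms B_conj_sym[of \<eta>1 e'] B_conj_sym[of \<eta>2 e'] unfolding eta_perp_def
  by (simp add: B_simps B_eta)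

end

section \<open>SU(1,1) in the basis (\<xi>1, \<xi>2)\<close>

definition mat2 :: "complex \<Rightarrow> complex \<Rightarrow> complex \<Rightarrow> complex \<Rightarrow> complex^2^2" where
  "mat2 a b c d = vector [vector [a, b], vector [c, d]]"

lemma mat2_nth [simp]:
  "mat2 a b c d $ 1 $ 1 = a" "mat2 a b c d $ 1 $ 2 = b"
  "mat2 a b c d $ 2 $ 1 = c" "mat2 a b c d $ 2 $ 2 = d"
  by (simp_all add: mat2_def)

lemma mat2_cases: "M = mat2 (M$1$1) (M$1$2) (M$2$1) (M$2$2)"
  by (simp add: vec_eq_iff forall_2)

lemma mat2_eq_iff: "mat2 a b c d = mat2 a' b' c' d' \<longleftrightarrow> a = a' \<and> b = b' \<and> c = c' \<and> d = d'"
  by (metis mat2_nth)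

lemma mat2_mult:
  "mat2 a b c d ** mat2 a' b' c' d' =
     mat2 (a*a' + b*c') (a*b' + b*d') (c*a' + d*c') (c*b' + d*d')"
  by (simp add: vec_eq_iff forall_2 matrix_matrix_mult_def sum_2)

lemma mat2_mult_vec: "mat2 a b c d *v z = vector [a * z$1 + b * z$2, c * z$1 + d * z$2]"
  by (simp add: vec_eq_iff forall_2 matrix_vector_mult_def sum_2)

lemma mat2_one: "mat 1 = mat2 1 0 0 1"
  by (simp add: vec_eq_iff forall_2 mat_def)

lemma mat2_uminus: "- mat2 a b c d = mat2 (-a) (-b) (-c) (-d)"
  by (simp add: vec_eq_iff forall_2)

lemma det_mat2: "det (mat2 a b c d) = a * d - b * c"
  by (simp add: det_2)

lemma Sxi_eq_mat2: "Sxi = mat2 (1 / sqrt 2) (1 / sqrt 2) (1 / sqrt 2) (- 1 / sqrt 2)"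
  by (simp add: Sxi_def vec_eq_iff forall_2 mat2_def of_real_def)

lemma sqrt2_mult_sqrt2: "complex_of_real (sqrt 2) * complex_of_real (sqrt 2) = 2"
  by (simp flip: of_real_mult)

lemma Sxi_mult_Sxi: "Sxi ** Sxi = mat 1"
  by (simp add: Sxi_eq_mat2 mat2_mult mat2_one sqrt2_mult_sqrt2)

text \<open>Sxi is the change of basis to (\<xi>1, \<xi>2) and its own inverse, so from_xi M is the matrix of
  the map whose matrix in that basis is M.\<close>

definition from_xi :: "complex^2^2 \<Rightarrow> complex^2^2" where
  "from_xi M = Sxi ** M ** Sxi"

lemma from_xi_mult: "from_xi M ** from_xi N = from_xi (M ** N)"
  unfolding from_xi_def by (metis Sxi_mult_Sxi matrix_mul_assoc matrix_mul_rid)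

lemma from_xi_from_xi: "from_xi (from_xi M) = M"
  unfolding from_xi_def by (metis Sxi_mult_Sxi matrix_mul_assoc matrix_mul_rid matrix_mul_lid)

lemma from_xi_mat2:
  "from_xi (mat2 a b c d) =
     mat2 ((a+b+c+d)/2) ((a-b+c-d)/2) ((a+b-c-d)/2) ((a-b-c+d)/2)"
  unfolding from_xi_def Sxi_eq_mat2 mat2_mult
  by (simp add: mat2_eq_iff field_simps sqrt2_mult_sqrt2)

definition xi_matrix :: "real \<Rightarrow> real \<Rightarrow> real \<Rightarrow> real \<Rightarrow> complex^2^2" where
  "xi_matrix a b c d = from_xi (mat2 (of_real a) (\<i> * of_real b) (\<i> * of_real c) (of_real d))"

lemma xi_matrix_mult:
  "xi_matrix a b c d ** xi_matrix a' b' c' d' =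
     xi_matrix (a*a' - b*c') (a*b' + b*d') (c*a' + d*c') (d*d' - c*b')"
  unfolding xi_matrix_def from_xi_mult mat2_mult by (simp add: mat2_eq_iff algebra_simps)

lemma gP_eq_xi_matrix: "gP l b = xi_matrix l b 0 (1/l)"
  unfolding gP_def xi_matrix_def from_xi_def mat2_def by simp

lemma gP_mult: "gP l b ** gP l' b' = gP (l*l') (l*b' + b/l')"
  unfolding gP_eq_xi_matrix xi_matrix_mult by simp

definition B11_xi :: "complex^2 \<Rightarrow> complex^2 \<Rightarrow> complex" where
  "B11_xi z w = z$1 * cnj (w$2) + z$2 * cnj (w$1)"

lemma B11_Sxi: "B11 (Sxi *v z) (Sxi *v w) = B11_xi z w"
  unfolding B11_def B11_xi_def Sxi_eq_mat2 mat2_mult_vec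
  by (simp add: field_simps sqrt2_mult_sqrt2)

lemma SU11_from_xi_iff:
  "from_xi M \<in> SU11 \<longleftrightarrow> det M = 1 \<and> (\<forall>z w. B11_xi (M *v z) (M *v w) = B11_xi z w)"
proof -
  have det: "det (from_xi M) = det M"
    using arg_cong[OF Sxi_mult_Sxi, of det] unfolding from_xi_def det_mul by (simp add: algebra_simps)
  have from_xi_vec: "from_xi M *v z = Sxi *v (M *v (Sxi *v z))" for z
    unfolding from_xi_def by (simp add: matrix_vector_mul_assoc matrix_mul_assoc)
  have Sxi_Sxi_vec: "Sxi *v (Sxi *v z) = z" for z
    by (simp add: matrix_vector_mul_assoc Sxi_mult_Sxi)
  have "(\<forall>z w. B11 (from_xi M *v z) (from_xi M *v w) = B11 z w) \<longleftrightarrow>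
        (\<forall>z w. B11_xi (M *v z) (M *v w) = B11_xi z w)"
    unfolding from_xi_vec B11_Sxi by (metis B11_Sxi Sxi_Sxi_vec)
  then show ?thesis unfolding SU11_def using det by simp
qed

lemma xi_matrix_SU11:
  assumes "a*d + b*c = 1"
  shows "xi_matrix a b c d \<in> SU11"
proof -
  let ?M = "mat2 (of_real a) (\<i> * of_real b) (\<i> * of_real c) (of_real d)"
  have "det ?M = of_real (a*d + b*c)"
    unfolding det_mat2 by (simp add: algebra_simps)
  moreover have "B11_xi (?M *v z) (?M *v w) = of_real (a*d + b*c) * B11_xi z w" for z w
    unfolding B11_xi_def mat2_mult_vec by (simp add: algebra_simps)
  ultimately show ?thesis
    unfolding xi_matrix_def SU11_from_xi_iff using assms by simp
qed

lemma SU11_imp_xi_matrix: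
  assumes "g \<in> SU11"
  obtains a b c d where "a*d + b*c = 1" "g = xi_matrix a b c d"
proof -
  define \<alpha> \<beta> \<gamma> \<delta> where "\<alpha> = from_xi g $1$1" "\<beta> = from_xi g $1$2"
    "\<gamma> = from_xi g $2$1" "\<delta> = from_xi g $2$2"
  have g: "g = from_xi (mat2 \<alpha> \<beta> \<gamma> \<delta>)"
    unfolding \<alpha>_\<beta>_\<gamma>_\<delta>_def by (metis mat2_cases from_xi_from_xi)
  have det: "\<alpha> * \<delta> - \<beta> * \<gamma> = 1"
    and pres: "\<And>z w. B11_xi (mat2 \<alpha> \<beta> \<gamma> \<delta> *v z) (mat2 \<alpha> \<beta> \<gamma> \<delta> *v w) = B11_xi z w"
    using assms unfolding g SU11_from_xi_iff det_mat2 by auto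
  have q1: "\<alpha> * cnj \<gamma> + \<gamma> * cnj \<alpha> = 0"
    using pres[of "vector [1,0]" "vector [1,0]"] unfolding mat2_mult_vec B11_xi_def by simp
  have q2: "\<alpha> * cnj \<delta> + \<gamma> * cnj \<beta> = 1"
    using pres[of "vector [1,0]" "vector [0,1]"] unfolding mat2_mult_vec B11_xi_def by simp
  have q3: "\<beta> * cnj \<delta> + \<delta> * cnj \<beta> = 0"
    using pres[of "vector [0,1]" "vector [0,1]"] unfolding mat2_mult_vec B11_xi_def by simp
  have q2': "cnj \<alpha> * \<delta> + cnj \<gamma> * \<beta> = 1"
    using arg_cong[OF q2, of cnj] by simp
  \<comment> \<open>q1--q3 say that the adjoint of M for B11_xi is its adjugate\<close>
  have "cnj \<alpha> = \<alpha> * (cnj \<alpha> * \<delta> + cnj \<gamma> * \<beta>)"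
    using det q1 by algebra
  then have ra: "cnj \<alpha> = \<alpha>" using q2' by simp
  have "cnj \<beta> = - \<beta> * (\<alpha> * cnj \<delta> + \<gamma> * cnj \<beta>)"
    using det q3 by algebra
  then have rb: "cnj \<beta> = - \<beta>" using q2 by simp
  have "cnj \<gamma> = - \<gamma> * (cnj \<alpha> * \<delta> + cnj \<gamma> * \<beta>)"
    using det q1 by algebra
  then have rc: "cnj \<gamma> = - \<gamma>" using q2' by simp
  have "cnj \<delta> = \<delta> * (\<alpha> * cnj \<delta> + \<gamma> * cnj \<beta>)"
    using det q3 by algebra
  then have rd: "cnj \<delta> = \<delta>" using q2 by simp
  have "\<alpha> = of_real (Re \<alpha>)" "\<beta> = \<i> * of_real (Im \<beta>)"
    "\<gamma> = \<i> * of_real (Im \<gamma>)" "\<delta> = of_real (Re \<delta>)"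
    using ra rb rc rd by (simp_all add: complex_eq_iff)
  then have "g = xi_matrix (Re \<alpha>) (Im \<beta>) (Im \<gamma>) (Re \<delta>)"
    unfolding g xi_matrix_def by metis
  moreover have "Re \<alpha> * Re \<delta> + Im \<beta> * Im \<gamma> = 1"
    using arg_cong[OF det, of Re] ra rb rc rd by (simp add: complex_eq_iff)
  ultimately show ?thesis using that by blast
qed

lemma gP_SU11: "l > 0 \<Longrightarrow> gP l b \<in> SU11"
  unfolding gP_eq_xi_matrix by (rule xi_matrix_SU11) simp

lemma gP_Pgrp: "l > 0 \<Longrightarrow> gP l b \<in> Pgrp"
  unfolding Pgrp_def by blast

lemma SU11_mult: "g \<in> SU11 \<Longrightarrow> h \<in> SU11 \<Longrightarrow> g ** h \<in> SU11"
  unfolding SU11_def by (simp add: det_mul matrix_vector_mul_assoc[symmetric])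

lemma minus_one_eq_xi_matrix: "- mat 1 = xi_matrix (-1) 0 0 (-1)"
  unfolding xi_matrix_def from_xi_mat2 mat2_one mat2_uminus by (simp add: mat2_eq_iff)

lemma minus_one_SU11: "- mat 1 \<in> SU11"
  unfolding minus_one_eq_xi_matrix by (rule xi_matrix_SU11) simp

definition weyl :: "complex^2^2" where
  "weyl = xi_matrix 0 1 1 0"

definition lower_unipotent :: "real \<Rightarrow> complex^2^2" where
  "lower_unipotent c = xi_matrix 1 0 c 1"

lemma weyl_SU11: "weyl \<in> SU11"
  unfolding weyl_def by (rule xi_matrix_SU11) simp

lemma lower_unipotent_SU11: "lower_unipotent c \<in> SU11"
  unfolding lower_unipotent_def by (rule xi_matrix_SU11) simp

lemma gP_mult_weyl: "l \<noteq> 0 \<Longrightarrow> gP l 0 ** weyl = weyl ** gP (1/l) 0"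
  unfolding gP_eq_xi_matrix weyl_def xi_matrix_mult by simp

lemma lower_unipotent_mult_weyl: "lower_unipotent c ** weyl = weyl ** gP 1 c"
  unfolding gP_eq_xi_matrix weyl_def lower_unipotent_def xi_matrix_mult by simp

lemma SU11_cases:
  assumes "g \<in> SU11"
  obtains (P) l b where "l > 0" "g = gP l b"
    | (minus_P) l b where "l > 0" "g = - mat 1 ** gP l b"
    | (big_cell) x c y where "g = gP 1 x ** lower_unipotent c ** gP 1 y"
proof -
  obtain a b c d where det: "a*d + b*c = 1" and g: "g = xi_matrix a b c d"
    using SU11_imp_xi_matrix[OF assms] .
  show thesis
  proof (cases "c = 0")
    case True
    then have "a * d = 1" using det by simp
    then have a: "a \<noteq> 0" and d: "d = 1 / a"
      by (auto simp: eq_divide_eq mult.commute)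
    show thesis
    proof (cases "a > 0")
      case True
      then show thesis using P[of a b] unfolding g gP_eq_xi_matrix using \<open>c = 0\<close> d by simp
    next
      case False
      then show thesis
        using minus_P[of "-a" "-b"] a \<open>c = 0\<close> d
        unfolding g gP_eq_xi_matrix minus_one_eq_xi_matrix xi_matrix_mult by simp
    qed
  next
    case False
    define x y where "x = (1 - a) / c" and "y = (1 - d) / c"
    have ha: "a = 1 - x * c" and hd: "d = 1 - y * c"
      unfolding x_def y_def using False by simp_all
    have hb: "b = a * y + x"
    proof -
      have "b * c = (a * y + x) * c"
        unfolding x_def y_def using False det by (simp add: field_simps) algebra
      then show ?thesis using False by simp
    qed
    have "g = gP 1 x ** lower_unipotent c ** gP 1 y"
      unfolding g hb ha hd gP_eq_xi_matrix lower_unipotent_def xi_matrix_mult by (simp add: algebra_simps)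
    then show thesis by (rule big_cell)
  qed
qed

lemma continuous_on_mat2:
  assumes "continuous_on S fa" "continuous_on S fb" "continuous_on S fc" "continuous_on S fd"
  shows "continuous_on S (\<lambda>x. mat2 (fa x) (fb x) (fc x) (fd x))"
proof -
  have "mat2 (fa x) (fb x) (fc x) (fd x) =
        (\<chi> i j. if i = 1 then if j = 1 then fa x else fb x else if j = 1 then fc x else fd x)" for x
    by (simp add: vec_eq_iff forall_2)
  moreover have "continuous_on S (\<lambda>x. \<chi> i j. if i = 1 then if j = 1 then fa x else fb x
                                          else if j = 1 then fc x else fd x)"
    apply (intro continuous_on_vec_lambda)
    subgoal for i j by (cases "i = 1"; cases "j = 1") (simp_all add: assms)
    done
  ultimately show ?thesis by simp
qed

lemma continuous_on_gP: "continuous_on ({0<..} \<times> UNIV) (\<lambda>p. gP (fst p) (snd p))"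
  unfolding gP_eq_xi_matrix xi_matrix_def from_xi_mat2
  by (intro continuous_on_mat2 continuous_intros) auto

section \<open>Continuous characters of the positive reals\<close>

lemma additive_of_int_mult:
  fixes \<psi> :: "real \<Rightarrow> real"
  assumes "Modules.additive \<psi>"
  shows "\<psi> (of_int k * x) = of_int k * \<psi> x"
proof -
  interpret Modules.additive \<psi> by (rule assms)
  have nat: "\<psi> (of_nat n * x) = of_nat n * \<psi> x" for n
    by (induction n) (simp_all add: zero add distrib_right)
  show ?thesis
  proof (cases "k \<ge> 0")
    case True
    then show ?thesis using nat[of "nat k"] by simp
  next
    case False
    then show ?thesis using nat[of "nat (- k)"] minus[of "of_nat (nat (- k)) * x"] by simp
  qed
qed

lemma continuous_additive_eq_linear:
  fixes \<psi> :: "real \<Rightarrow> real"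
  assumes add: "Modules.additive \<psi>" and cont: "continuous_on UNIV \<psi>"
  shows "\<psi> x = x * \<psi> 1"
proof -
  have "\<psi> q = q * \<psi> 1" if q: "q \<in> \<rat>" for q
  proof -
    obtain a b where b: "b > 0" and "coprime a b" and q: "q = of_int a / of_int b"
      using q by (rule Rats_cases')
    have "of_int b * \<psi> q = \<psi> (of_int a * 1)"
      using additive_of_int_mult[OF add, of b q] b q by simp
    also have "\<dots> = of_int a * \<psi> 1"
      by (rule additive_of_int_mult[OF add])
    finally show ?thesis
      using b unfolding q by (simp add: field_simps mult.commute)
  qed
  then have "\<rat> \<subseteq> {x. \<psi> x = x * \<psi> 1}" by blast
  moreover have "closed {x. \<psi> x = x * \<psi> 1}"
    using cont by (intro closed_Collect_eq continuous_intros)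
  ultimately have "closure \<rat> \<subseteq> {x. \<psi> x = x * \<psi> 1}"
    by (rule closure_minimal)
  then show ?thesis unfolding Rats_closure_real by blast
qed

lemma continuous_multiplicative_eq_powr:
  fixes h :: "real \<Rightarrow> real"
  assumes pos: "\<And>x. x > 0 \<Longrightarrow> h x > 0"
    and mult: "\<And>x y. x > 0 \<Longrightarrow> y > 0 \<Longrightarrow> h (x * y) = h x * h y"
    and cont: "continuous_on {0<..} h"
    and x: "x > 0"
  shows "h x = x powr ln (h (exp 1))"
proof -
  define \<psi> where "\<psi> t = ln (h (exp t))" for t
  have "Modules.additive \<psi>"
    by unfold_locales (simp add: \<psi>_def exp_add mult pos ln_mult less_imp_neq[OF pos, symmetric])
  moreover have "continuous_on UNIV \<psi>"
    unfolding \<psi>_def using pos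
    by (intro continuous_on_ln continuous_on_compose2[OF cont] continuous_intros)
      (auto simp: less_imp_neq[OF pos, symmetric])
  ultimately have "\<psi> (ln x) = ln x * \<psi> 1"
    by (rule continuous_additive_eq_linear)
  then have "exp (ln (h x)) = exp (ln x * ln (h (exp 1)))"
    unfolding \<psi>_def using x by simp
  then show ?thesis
    using pos[of x] x by (simp add: powr_def mult.commute)
qed

lemma bij_betw_powr: "a \<noteq> 0 \<Longrightarrow> bij_betw (\<lambda>x::real. x powr a) {0<..} {0<..}"
  by (rule bij_betw_byWitness[where f' = "\<lambda>x. x powr (1 / a)"]) (auto simp: powr_powr)

section \<open>Projective unitary representations\<close>

lemma unitaryB_add: "unitaryB B T \<Longrightarrow> T (x + y) = T x + T y"
  unfolding unitaryB_def by blast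

lemma unitaryB_cscale: "unitaryB B T \<Longrightarrow> T (a *\<^sub>C x) = a *\<^sub>C T x"
  unfolding unitaryB_def by blast

lemma unitaryB_B: "unitaryB B T \<Longrightarrow> B (T x) (T y) = B x y"
  unfolding unitaryB_def by blast

lemma unitaryB_diff: "unitaryB B T \<Longrightarrow> T (x - y) = T x - T y"
  using unitaryB_add[of B T x "-y"] unitaryB_cscale[of B T "-1" y] by (simp add: cscale_minus_one)

lemma cline_cscale: "w \<in> cline v \<Longrightarrow> a *\<^sub>C w \<in> cline v"
  unfolding cline_def by (auto simp: cscale_cscale)

lemma cline_cscale_iff: "a \<noteq> 0 \<Longrightarrow> a *\<^sub>C w \<in> cline v \<longleftrightarrow> w \<in> cline v"
  using cline_cscale[of "a *\<^sub>C w" v "1/a"] cline_cscale[of w v a] by (auto simp: cscale_cscale cscale_one)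

lemma proj_rep_unitary: "proj_rep B R \<Longrightarrow> g \<in> SU11 \<Longrightarrow> unitaryB B (R g)"
  unfolding proj_rep_def by blast

lemma proj_rep_mult:
  assumes "proj_rep B R" "g \<in> SU11" "h \<in> SU11"
  obtains \<theta> where "\<theta> \<noteq> 0" "\<And>v. R (g ** h) v = \<theta> *\<^sub>C R g (R h v)"
proof -
  obtain \<theta> where "cmod \<theta> = 1" "R (g ** h) = (\<lambda>v. \<theta> *\<^sub>C R g (R h v))"
    using assms unfolding proj_rep_def by blast
  moreover from \<open>cmod \<theta> = 1\<close> have "\<theta> \<noteq> 0" by auto
  ultimately show thesis using that[of \<theta>] by simp
qed

lemma proj_rep_fix_mult:
  assumes rep: "proj_rep B R" and g: "g \<in> SU11" and h: "h \<in> SU11"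
    and "R g v \<in> cline v" "R h v \<in> cline v"
  shows "R (g ** h) v \<in> cline v"
proof -
  obtain \<theta> where "\<theta> \<noteq> 0" "R (g ** h) v = \<theta> *\<^sub>C R g (R h v)"
    using proj_rep_mult[OF rep g h] by metis
  moreover obtain a where "R h v = a *\<^sub>C v"
    using assms(5) unfolding cline_def by blast
  ultimately show ?thesis
    using assms(4) unitaryB_cscale[OF proj_rep_unitary[OF rep g]] by (simp add: cline_cscale)
qed

lemma proj_rep_fix_minus_one: "proj_rep B R \<Longrightarrow> R (- mat 1) v \<in> cline v"
  unfolding proj_rep_def cline_def by auto

lemma proj_rep_fix_conj:
  assumes rep: "proj_rep B R" and g: "g \<in> SU11" and h: "h \<in> SU11" and w: "w \<in> SU11"
    and gw: "g ** w = w ** h" and hx: "R h x \<in> cline x"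
  shows "R g (R w x) \<in> cline (R w x)"
proof -
  obtain \<theta>1 where "\<theta>1 \<noteq> 0" and \<theta>1: "R (g ** w) x = \<theta>1 *\<^sub>C R g (R w x)"
    using proj_rep_mult[OF rep g w] by metis
  obtain \<theta>2 where "\<theta>2 \<noteq> 0" and \<theta>2: "R (w ** h) x = \<theta>2 *\<^sub>C R w (R h x)"
    using proj_rep_mult[OF rep w h] by metis
  obtain a where "R h x = a *\<^sub>C x"
    using hx unfolding cline_def by blast
  then have "\<theta>1 *\<^sub>C R g (R w x) = (\<theta>2 * a) *\<^sub>C R w x"
    using \<theta>1 \<theta>2 gw unitaryB_cscale[OF proj_rep_unitary[OF rep w]] by (simp add: cscale_cscale)
  then have "R g (R w x) = (\<theta>2 * a / \<theta>1) *\<^sub>C R w x"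
    using \<open>\<theta>1 \<noteq> 0\<close> by (metis (no_types) cscale_cscale cscale_one divide_self_if
        mult.commute times_divide_eq_right)
  then show ?thesis
    unfolding cline_def by blast
qed

lemma proj_rep_fix_SU11:
  assumes rep: "proj_rep B R"
    and fix_P: "\<And>l b. l > 0 \<Longrightarrow> R (gP l b) y \<in> cline y"
    and fix_lower: "\<And>c. R (lower_unipotent c) y \<in> cline y"
    and g: "g \<in> SU11"
  shows "R g y \<in> cline y"
  using g
proof (cases rule: SU11_cases)
  case (P l b)
  then show ?thesis using fix_P by simp
next
  case (minus_P l b)
  then show ?thesis
    using proj_rep_fix_mult[OF rep minus_one_SU11 gP_SU11 proj_rep_fix_minus_one[OF rep] fix_P] by simp
next
  case (big_cell x c y')
  have "R (gP 1 x ** lower_unipotent c) y \<in> cline y"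
    using proj_rep_fix_mult[OF rep gP_SU11 lower_unipotent_SU11 fix_P fix_lower] by simp
  then show ?thesis
    using proj_rep_fix_mult[OF rep SU11_mult[OF gP_SU11 lower_unipotent_SU11] gP_SU11 _ fix_P] big_cell
    by simp
qed

section \<open>The normalised lift on P\<close>

locale lifted_rep = hyperbolic_pair B \<eta>1 \<eta>2
  for B :: "'h::{cnormed_vector,banach} \<Rightarrow> 'h \<Rightarrow> complex" and \<eta>1 \<eta>2 +
  fixes R L :: "complex^2^2 \<Rightarrow> 'h \<Rightarrow> 'h"
  assumes form: "sig_1_infty_form B"
    and rep: "proj_rep B R"
    and irred: "irreducible_rep B R"
    and eta1_fix: "\<forall>g\<in>Pgrp. R g \<eta>1 \<in> cline \<eta>1"
    and eta2_fix: "\<forall>l>0. R (gP l 0) \<eta>2 \<in> cline \<eta>2"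
    and lift_unitary: "\<forall>g\<in>Pgrp. unitaryB B (L g)"
    and lift_proj: "\<forall>g\<in>Pgrp. \<exists>\<theta>. cmod \<theta> = 1 \<and> L g = (\<lambda>v. \<theta> *\<^sub>C R g v)"
    and lift_hom: "\<forall>g\<in>Pgrp. \<forall>h\<in>Pgrp. L (g ** h) = L g \<circ> L h"
    and lift_cont: "\<forall>v. continuous_on Pgrp (\<lambda>g. L g v)"
    and lift_norm: "\<forall>g\<in>Pgrp. Im (B (L g \<eta>1) \<eta>2) = 0 \<and> Re (B (L g \<eta>1) \<eta>2) > 0"
begin

abbreviation \<rho> :: "real \<Rightarrow> real \<Rightarrow> 'h \<Rightarrow> 'h" where
  "\<rho> l b \<equiv> L (gP l b)"

lemma rho_unitary: "l > 0 \<Longrightarrow> unitaryB B (\<rho> l b)"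
  using lift_unitary gP_Pgrp by blast

lemma rho_add: "l > 0 \<Longrightarrow> \<rho> l b (x + y) = \<rho> l b x + \<rho> l b y"
  using unitaryB_add[OF rho_unitary] by blast

lemma rho_cscale: "l > 0 \<Longrightarrow> \<rho> l b (a *\<^sub>C x) = a *\<^sub>C \<rho> l b x"
  using unitaryB_cscale[OF rho_unitary] by blast

lemma rho_diff: "l > 0 \<Longrightarrow> \<rho> l b (x - y) = \<rho> l b x - \<rho> l b y"
  using unitaryB_diff[OF rho_unitary] by blast

lemma B_rho_rho: "l > 0 \<Longrightarrow> B (\<rho> l b x) (\<rho> l b y) = B x y"
  using unitaryB_B[OF rho_unitary] by blast

lemma rho_mult:
  "l > 0 \<Longrightarrow> l' > 0 \<Longrightarrow> \<rho> l b (\<rho> l' b' v) = \<rho> (l*l') (l*b' + b/l') v"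
  using lift_hom gP_Pgrp gP_mult by (metis comp_apply)

lemma rho_one: "\<rho> 1 0 v = v"
proof -
  have "bij (\<rho> 1 0)"
    using rho_unitary[of 1] unfolding unitaryB_def by simp
  then obtain w where "v = \<rho> 1 0 w"
    by (metis bij_pointE)
  then show ?thesis
    using rho_mult[of 1 1 0 0 w] by simp
qed

lemma continuous_on_rho: "continuous_on ({0<..} \<times> UNIV) (\<lambda>p. \<rho> (fst p) (snd p) v)"
proof -
  have "(\<lambda>p. gP (fst p) (snd p)) ` ({0<..} \<times> UNIV) \<subseteq> Pgrp"
    by (auto intro: gP_Pgrp)
  then show ?thesis
    using continuous_on_compose2[OF _ continuous_on_gP] lift_cont by blast
qed

lemma continuous_on_rho_unipotent: "continuous_on UNIV (\<lambda>b. \<rho> 1 b v)"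
  by (rule continuous_on_compose2[OF continuous_on_rho, where f = "\<lambda>b. (1, b)", simplified])
    (auto intro: continuous_intros)

lemma continuous_on_rho_diagonal: "continuous_on {0<..} (\<lambda>l. \<rho> l 0 v)"
  by (rule continuous_on_compose2[OF continuous_on_rho, where f = "\<lambda>l. (l, 0)", simplified])
    (auto intro: continuous_intros)

lemma rho_eq_cscale_R:
  assumes "l > 0"
  obtains \<theta> where "\<theta> \<noteq> 0" "\<And>v. \<rho> l b v = \<theta> *\<^sub>C R (gP l b) v"
proof -
  obtain \<theta> where "cmod \<theta> = 1" "\<rho> l b = (\<lambda>v. \<theta> *\<^sub>C R (gP l b) v)"
    using lift_proj gP_Pgrp[OF assms] by blast
  moreover from \<open>cmod \<theta> = 1\<close> have "\<theta> \<noteq> 0" by auto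
  ultimately show thesis using that[of \<theta>] by simp
qed

lemma rho_mem_cline_iff: "l > 0 \<Longrightarrow> \<rho> l b v \<in> cline w \<longleftrightarrow> R (gP l b) v \<in> cline w"
  by (metis rho_eq_cscale_R cline_cscale_iff)

definition eta1_coeff :: "real \<Rightarrow> real \<Rightarrow> real" where
  "eta1_coeff l b = Re (B (\<rho> l b \<eta>1) \<eta>2)"

lemma rho_eta1_eq_coeff:
  assumes "l > 0"
  shows "\<rho> l b \<eta>1 = of_real (eta1_coeff l b) *\<^sub>C \<eta>1"
proof -
  obtain \<theta> where \<theta>: "\<And>v. \<rho> l b v = \<theta> *\<^sub>C R (gP l b) v"
    using rho_eq_cscale_R[OF assms] by metis
  obtain a where "R (gP l b) \<eta>1 = a *\<^sub>C \<eta>1"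
    using eta1_fix gP_Pgrp[OF assms] unfolding cline_def by blast
  then have \<rho>\<eta>1: "\<rho> l b \<eta>1 = (\<theta> * a) *\<^sub>C \<eta>1"
    using \<theta> by (simp add: cscale_cscale)
  moreover have "Im (B (\<rho> l b \<eta>1) \<eta>2) = 0"
    using lift_norm gP_Pgrp[OF assms] by blast
  then have "B (\<rho> l b \<eta>1) \<eta>2 = of_real (eta1_coeff l b)"
    unfolding eta1_coeff_def by (simp add: complex_eq_iff)
  ultimately show ?thesis
    by (simp add: B_simps B_eta)
qed

lemma eta1_coeff_pos: "l > 0 \<Longrightarrow> eta1_coeff l b > 0"
  using lift_norm gP_Pgrp unfolding eta1_coeff_def by blast

lemma eta1_coeff_mult:
  assumes "l > 0" "l' > 0"
  shows "eta1_coeff (l*l') (l*b' + b/l') = eta1_coeff l b * eta1_coeff l' b'"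
proof -
  have "of_real (eta1_coeff (l*l') (l*b' + b/l')) *\<^sub>C \<eta>1 = \<rho> (l*l') (l*b' + b/l') \<eta>1"
    using rho_eta1_eq_coeff[of "l*l'"] assms by simp
  also have "\<dots> = \<rho> l b (\<rho> l' b' \<eta>1)"
    using rho_mult[OF assms] by simp
  also have "\<dots> = of_real (eta1_coeff l b * eta1_coeff l' b') *\<^sub>C \<eta>1"
    using assms by (simp add: rho_eta1_eq_coeff rho_cscale cscale_cscale mult.commute)
  finally have "B (of_real (eta1_coeff (l*l') (l*b' + b/l')) *\<^sub>C \<eta>1) \<eta>2 =
                B (of_real (eta1_coeff l b * eta1_coeff l' b') *\<^sub>C \<eta>1) \<eta>2"
    by simp
  then show ?thesis by (simp add: B_simps B_eta flip: of_real_mult)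
qed

lemma eta1_coeff_one: "eta1_coeff 1 0 = 1"
  unfolding eta1_coeff_def using rho_one B_eta1_eta2 by simp

text \<open>Conjugation by g(2,0) turns g(1,b) into g(1,4b), so the positive number eta1_coeff 1 b
  equals its own fourth power.\<close>
lemma eta1_coeff_unipotent: "eta1_coeff 1 b = 1"
proof -
  have pos: "eta1_coeff 1 b > 0" by (rule eta1_coeff_pos) simp
  have add: "eta1_coeff 1 (x + y) = eta1_coeff 1 x * eta1_coeff 1 y" for x y
    using eta1_coeff_mult[of 1 1 y x] by (simp add: add.commute)
  have "eta1_coeff 1 (2*b) = eta1_coeff 1 b * eta1_coeff 1 b"
    using add[of b b] by simp
  then have "eta1_coeff 1 b ^ 4 = eta1_coeff 1 (4*b)"
    using add[of "2*b" "2*b"] by (simp add: power4_eq_xxxx)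
  also have "\<dots> = eta1_coeff 2 0 * eta1_coeff 1 b * eta1_coeff (1/2) 0"
    using eta1_coeff_mult[of 2 1 b 0] eta1_coeff_mult[of 2 "1/2" 0 "2*b"] by simp
  also have "\<dots> = eta1_coeff 1 b"
    using eta1_coeff_mult[of 2 "1/2" 0 0] eta1_coeff_one by simp
  finally have "eta1_coeff 1 b * (eta1_coeff 1 b ^ 3 - 1) = 0"
    by (simp add: algebra_simps power4_eq_xxxx power3_eq_cube)
  then have "eta1_coeff 1 b ^ 3 = 1 ^ 3"
    using pos by simp
  then show ?thesis
    using pos power_eq_iff_eq_base[of 3 "eta1_coeff 1 b" 1] by simp
qed

definition chi :: "real \<Rightarrow> real" where
  "chi l = eta1_coeff l 0"

lemma chi_pos: "l > 0 \<Longrightarrow> chi l > 0"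
  unfolding chi_def by (rule eta1_coeff_pos)

lemma chi_mult: "l > 0 \<Longrightarrow> l' > 0 \<Longrightarrow> chi (l * l') = chi l * chi l'"
  unfolding chi_def using eta1_coeff_mult[of l l' 0 0] by simp

lemma chi_one: "chi 1 = 1"
  unfolding chi_def by (rule eta1_coeff_one)

lemma rho_eta1: "l > 0 \<Longrightarrow> \<rho> l b \<eta>1 = of_real (chi l) *\<^sub>C \<eta>1"
  unfolding chi_def using rho_eta1_eq_coeff eta1_coeff_mult[of 1 l 0 "b*l"] eta1_coeff_unipotent
  by simp

lemma continuous_on_chi: "continuous_on {0<..} chi"
  unfolding chi_def eta1_coeff_def
  by (intro continuous_intros continuous_on_B_left[OF form] continuous_on_rho_diagonal)

lemma B_rho_eta1: "l > 0 \<Longrightarrow> B (\<rho> l b v) \<eta>1 = of_real (1 / chi l) * B v \<eta>1"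
proof -
  assume l: "l > 0"
  have "\<eta>1 = \<rho> l b (of_real (1 / chi l) *\<^sub>C \<eta>1)"
    using rho_eta1[OF l] chi_pos[OF l] by (simp add: rho_cscale[OF l] cscale_cscale cscale_one)
  then have "B (\<rho> l b v) \<eta>1 = B v (of_real (1 / chi l) *\<^sub>C \<eta>1)"
    using B_rho_rho[OF l] by metis
  then show ?thesis by (simp add: B_simps)
qed

lemma rho_eta2_diagonal: "l > 0 \<Longrightarrow> \<rho> l 0 \<eta>2 = of_real (1 / chi l) *\<^sub>C \<eta>2"
proof -
  assume l: "l > 0"
  obtain a where a: "\<rho> l 0 \<eta>2 = a *\<^sub>C \<eta>2"
    using eta2_fix l rho_mem_cline_iff[OF l] unfolding cline_def by blast
  then have "of_real (1 / chi l) = B (\<rho> l 0 \<eta>2) \<eta>1"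
    using B_rho_eta1[OF l, of 0 \<eta>2] by (simp add: B_eta)
  also have "\<dots> = a"
    using a by (simp add: B_simps B_eta)
  finally show ?thesis using a by simp
qed

text \<open>chi, Delta, cocycle and unitary_part are the \<chi>, \<Delta>, c and \<pi> of the matrix form.\<close>

definition eta2_coeff :: "real \<Rightarrow> real \<Rightarrow> complex" where
  "eta2_coeff l b = B (\<rho> l b \<eta>2) \<eta>2"

definition Delta :: "real \<Rightarrow> real \<Rightarrow> real" where
  "Delta l b = Im (eta2_coeff l b)"

definition cocycle :: "real \<Rightarrow> real \<Rightarrow> 'h" where
  "cocycle l b = proj_perp (\<rho> l b \<eta>2)"

definition unitary_part :: "real \<Rightarrow> real \<Rightarrow> 'h \<Rightarrow> 'h" where
  "unitary_part l b u = proj_perp (\<rho> l b u)"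

lemma cocycle_in_perp: "cocycle l b \<in> eta_perp"
  unfolding cocycle_def by (rule proj_perp_in)

lemma unitary_part_in_perp: "unitary_part l b u \<in> eta_perp"
  unfolding unitary_part_def by (rule proj_perp_in)

lemma rho_eta2_decomp:
  "l > 0 \<Longrightarrow> \<rho> l b \<eta>2 = eta2_coeff l b *\<^sub>C \<eta>1 + of_real (1 / chi l) *\<^sub>C \<eta>2 + cocycle l b"
  using hyperbolic_decomp[of "\<rho> l b \<eta>2"] B_rho_eta1[of l b \<eta>2] unfolding cocycle_def eta2_coeff_def
  by (simp add: B_eta)

text \<open>Isotropy of \<rho> l b \<eta>2 determines the real part of its \<eta>1-coordinate.\<close>
lemma Re_eta2_coeff:
  assumes "l > 0"
  shows "Re (eta2_coeff l b) = - chi l * Re (B (cocycle l b) (cocycle l b)) / 2"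
proof -
  have "0 = B (\<rho> l b \<eta>2) (\<rho> l b \<eta>2)"
    using B_rho_rho[OF assms] eta2_isotropic by simp
  also have "\<dots> = eta2_coeff l b * of_real (1 / chi l) + of_real (1 / chi l) * cnj (eta2_coeff l b)
                   + B (cocycle l b) (cocycle l b)"
    unfolding rho_eta2_decomp[OF assms]
    using B_hyperbolic_coords[OF cocycle_in_perp cocycle_in_perp] by simp
  finally have "2 * Re (eta2_coeff l b) / chi l + Re (B (cocycle l b) (cocycle l b)) = 0"
    by (simp add: complex_eq_iff)
  then show ?thesis
    using chi_pos[OF assms] by (simp add: field_simps)
qed

lemma rho_eta2:
  "l > 0 \<Longrightarrow> \<rho> l b \<eta>2 =
     (of_real (- chi l * Re (B (cocycle l b) (cocycle l b)) / 2) + \<i> * of_real (Delta l b)) *\<^sub>C \<eta>1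
     + of_real (1 / chi l) *\<^sub>C \<eta>2 + cocycle l b"
proof -
  assume l: "l > 0"
  have "eta2_coeff l b =
          of_real (- chi l * Re (B (cocycle l b) (cocycle l b)) / 2) + \<i> * of_real (Delta l b)"
    using Re_eta2_coeff[OF l] unfolding Delta_def by (simp add: complex_eq_iff)
  then show ?thesis using rho_eta2_decomp[OF l] by simp
qed

lemma rho_perp:
  assumes l: "l > 0" and u: "u \<in> eta_perp"
  shows "\<rho> l b u = (- of_real (chi l) * B (unitary_part l b u) (cocycle l b)) *\<^sub>C \<eta>1 + unitary_part l b u"
proof -
  define \<alpha> where "\<alpha> = B (\<rho> l b u) \<eta>2"
  have decomp: "\<rho> l b u = \<alpha> *\<^sub>C \<eta>1 + 0 *\<^sub>C \<eta>2 + unitary_part l b u"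
    using hyperbolic_decomp[of "\<rho> l b u"] B_rho_eta1[OF l, of b u] u
    unfolding \<alpha>_def unitary_part_def eta_perp_def by simp
  have "0 = B (\<rho> l b u) (\<rho> l b \<eta>2)"
    using B_rho_rho[OF l] u unfolding eta_perp_def by simp
  also have "\<dots> = \<alpha> * of_real (1 / chi l) + B (unitary_part l b u) (cocycle l b)"
    using B_hyperbolic_coords[OF unitary_part_in_perp cocycle_in_perp,
        where p = \<alpha> and q = 0 and p' = "eta2_coeff l b" and q' = "of_real (1 / chi l)"]
    unfolding decomp rho_eta2_decomp[OF l] by simp
  finally have "\<alpha> = - of_real (chi l) * B (unitary_part l b u) (cocycle l b)"
    using chi_pos[OF l] by (simp add: field_simps add_eq_0_iff)
  then show ?thesis using decomp by simp
qed

lemma unitary_part_mult: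
  assumes "l > 0" "l' > 0" "u \<in> eta_perp"
  shows "unitary_part l b (unitary_part l' b' u) = unitary_part (l*l') (l*b' + b/l') u"
proof -
  define \<alpha> where "\<alpha> = - of_real (chi l') * B (unitary_part l' b' u) (cocycle l' b')"
  have "unitary_part l' b' u = \<rho> l' b' u - \<alpha> *\<^sub>C \<eta>1"
    using rho_perp[OF assms(2,3)] unfolding \<alpha>_def by simp
  then have "unitary_part l b (unitary_part l' b' u) =
      proj_perp (\<rho> l b (\<rho> l' b' u)) - proj_perp ((\<alpha> * of_real (chi l)) *\<^sub>C \<eta>1)"
    unfolding unitary_part_def
    by (simp add: rho_diff[OF assms(1)] rho_cscale[OF assms(1)] rho_eta1[OF assms(1)] proj_perp_diff
        cscale_cscale)
  then show ?thesis
    unfolding unitary_part_def proj_perp_eta1 rho_mult[OF assms(1,2)] by simp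
qed

lemma unitary_part_one: "u \<in> eta_perp \<Longrightarrow> unitary_part 1 0 u = u"
  unfolding unitary_part_def rho_one by (rule proj_perp_id)

lemma B_unitary_part:
  assumes "l > 0" "x \<in> eta_perp" "y \<in> eta_perp"
  shows "B (unitary_part l b x) (unitary_part l b y) = B x y"
proof -
  have "B x y = B (\<rho> l b x) (\<rho> l b y)"
    using B_rho_rho[OF assms(1)] by simp
  also have "\<dots> = B (unitary_part l b x) (unitary_part l b y)"
    unfolding rho_perp[OF assms(1,2)] rho_perp[OF assms(1,3)]
    using B_hyperbolic_coords[OF unitary_part_in_perp unitary_part_in_perp, where q = 0 and q' = 0]
    by simp
  finally show ?thesis by simp
qed

lemma unitary_on_unitary_part:
  assumes l: "l > 0"
  shows "unitary_on B eta_perp (unitary_part l b)"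
  unfolding unitary_on_def
proof (intro conjI ballI allI)
  show "unitary_part l b (x + y) = unitary_part l b x + unitary_part l b y" for x y
    unfolding unitary_part_def by (simp add: rho_add[OF l] proj_perp_add)
  show "unitary_part l b (a *\<^sub>C x) = a *\<^sub>C unitary_part l b x" for a x
    unfolding unitary_part_def by (simp add: rho_cscale[OF l] proj_perp_cscale)
  show "B (unitary_part l b x) (unitary_part l b y) = B x y" if "x \<in> eta_perp" "y \<in> eta_perp" for x y
    using B_unitary_part[OF l that] .
  have l': "1/l > 0" using l by simp
  show "bij_betw (unitary_part l b) eta_perp eta_perp"
    by (rule bij_betw_byWitness[where f' = "unitary_part (1/l) (-b)"])
      (use unitary_part_mult[OF l' l] unitary_part_mult[OF l l'] unitary_part_one unitary_part_in_perp l
        in auto)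
qed

lemma unitary_part_hom:
  "l > 0 \<Longrightarrow> l' > 0 \<Longrightarrow> l'' > 0 \<Longrightarrow> gP l b ** gP l' b' = gP l'' b'' \<Longrightarrow> u \<in> eta_perp \<Longrightarrow>
    unitary_part l b (unitary_part l' b' u) = unitary_part l'' b'' u"
  using unitary_part_mult gP_mult by (metis unitary_part_def)

lemma continuous_on_Delta: "continuous_on ({0<..} \<times> UNIV) (\<lambda>p. Delta (fst p) (snd p))"
  unfolding Delta_def eta2_coeff_def
  by (intro continuous_intros continuous_on_B_left[OF form] continuous_on_rho)

lemma continuous_on_proj_perp: "continuous_on S f \<Longrightarrow> continuous_on S (\<lambda>x. proj_perp (f x))"
  unfolding proj_perp_def
  by (intro continuous_intros continuous_on_cscale continuous_on_B_left[OF form])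

lemma continuous_on_cocycle: "continuous_on ({0<..} \<times> UNIV) (\<lambda>p. cocycle (fst p) (snd p))"
  unfolding cocycle_def by (intro continuous_on_proj_perp continuous_on_rho)

lemma continuous_on_unitary_part:
  "continuous_on ({0<..} \<times> UNIV) (\<lambda>p. unitary_part (fst p) (snd p) u)"
  unfolding unitary_part_def by (intro continuous_on_proj_perp continuous_on_rho)

lemma Delta_diagonal: "l > 0 \<Longrightarrow> Delta l 0 = 0"
  unfolding Delta_def eta2_coeff_def using rho_eta2_diagonal[of l] by (simp add: B_simps B_eta)

lemma cocycle_diagonal: "l > 0 \<Longrightarrow> cocycle l 0 = 0"
  unfolding cocycle_def using rho_eta2_diagonal[of l] by (simp add: proj_perp_eta2)

lemma rho_unipotent_eta2: "\<rho> 1 b \<eta>2 = eta2_coeff 1 b *\<^sub>C \<eta>1 + \<eta>2 + cocycle 1 b"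
  using rho_eta2_decomp[of 1 b] chi_one by (simp add: cscale_one)

lemma cocycle_add: "cocycle 1 (b + d) = cocycle 1 b + unitary_part 1 b (cocycle 1 d)"
proof -
  have "\<rho> 1 (b + d) \<eta>2 = \<rho> 1 b (\<rho> 1 d \<eta>2)"
    using rho_mult[of 1 1 b d] by (simp add: add.commute)
  also have "\<dots> = eta2_coeff 1 d *\<^sub>C \<eta>1 + \<rho> 1 b \<eta>2 + \<rho> 1 b (cocycle 1 d)"
    unfolding rho_unipotent_eta2[of d] by (simp add: rho_add rho_cscale rho_eta1 chi_one cscale_one)
  finally show ?thesis
    unfolding cocycle_def[of 1 "b + d"] by (simp add: proj_perp_add proj_perp_eta1 cocycle_def unitary_part_def)
qed

text \<open>Conjugating g(1,b) by g(l,0) gives g(1,l^2 b); comparing both sides on \<eta>2 yields (6) and (7).\<close>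
lemma rho_diagonal_unipotent_eta2:
  assumes l: "l > 0"
  shows "\<rho> l 0 (\<rho> 1 b \<eta>2) = of_real (1 / chi l) *\<^sub>C \<rho> 1 (l\<^sup>2 * b) \<eta>2"
proof -
  have "\<rho> l 0 (\<rho> 1 b \<eta>2) = \<rho> 1 (l\<^sup>2 * b) (\<rho> l 0 \<eta>2)"
    using rho_mult[OF l, of 1 0 b] rho_mult[of 1 l "l\<^sup>2 * b" 0] l by (simp add: power2_eq_square)
  then show ?thesis
    using rho_eta2_diagonal[OF l] by (simp add: rho_cscale)
qed

lemma rho_diagonal_rho_unipotent_eta2:
  assumes l: "l > 0"
  shows "\<rho> l 0 (\<rho> 1 b \<eta>2) =
           (eta2_coeff 1 b * of_real (chi l)) *\<^sub>C \<eta>1 + of_real (1 / chi l) *\<^sub>C \<eta>2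
           + unitary_part l 0 (cocycle 1 b)"
proof -
  have "\<rho> l 0 (cocycle 1 b) = unitary_part l 0 (cocycle 1 b)"
    using rho_perp[OF l cocycle_in_perp, of 0] cocycle_diagonal[OF l] by simp
  then show ?thesis
    unfolding rho_unipotent_eta2
    by (simp add: rho_add[OF l] rho_cscale[OF l] rho_eta1[OF l] rho_eta2_diagonal[OF l] cscale_cscale)
qed

lemma chi_unitary_part_cocycle: "l > 0 \<Longrightarrow> chi l *\<^sub>R unitary_part l 0 (cocycle 1 b) = cocycle 1 (l\<^sup>2 * b)"
proof -
  assume l: "l > 0"
  have "unitary_part l 0 (cocycle 1 b) = proj_perp (\<rho> l 0 (\<rho> 1 b \<eta>2))"
    unfolding rho_diagonal_rho_unipotent_eta2[OF l]
    by (simp add: proj_perp_add proj_perp_eta1 proj_perp_eta2 proj_perp_id[OF unitary_part_in_perp])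
  also have "\<dots> = of_real (1 / chi l) *\<^sub>C cocycle 1 (l\<^sup>2 * b)"
    unfolding rho_diagonal_unipotent_eta2[OF l] proj_perp_cscale cocycle_def ..
  finally show ?thesis
    using chi_pos[OF l] by (simp add: scaleR_cscale cscale_cscale cscale_one)
qed

lemma chi_square_Delta: "l > 0 \<Longrightarrow> (chi l)\<^sup>2 * Delta 1 b = Delta 1 (l\<^sup>2 * b)"
proof -
  assume l: "l > 0"
  have "eta2_coeff 1 b * of_real (chi l) = B (\<rho> l 0 (\<rho> 1 b \<eta>2)) \<eta>2"
    unfolding rho_diagonal_rho_unipotent_eta2[OF l]
    using unitary_part_in_perp[of l 0 "cocycle 1 b"] by (simp add: B_simps B_eta eta_perp_def)
  also have "\<dots> = of_real (1 / chi l) * eta2_coeff 1 (l\<^sup>2 * b)"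
    unfolding rho_diagonal_unipotent_eta2[OF l] eta2_coeff_def by (simp add: B_simps)
  finally have "Im (eta2_coeff 1 b * of_real (chi l)) = Im (of_real (1 / chi l) * eta2_coeff 1 (l\<^sup>2 * b))"
    by simp
  then have "Delta 1 b * chi l = Delta 1 (l\<^sup>2 * b) / chi l"
    unfolding Delta_def by simp
  then show ?thesis
    using chi_pos[OF l] by (simp add: field_simps power2_eq_square)
qed

text \<open>Since g(1,d) = g(1,b) g(1,d-b), unitarity of \<rho>(1,b) expresses B(c(d), c(b)) through
  \<eta>1-coordinates of images of \<eta>2.\<close>
lemma B_cocycle_cocycle:
  "B (cocycle 1 d) (cocycle 1 b) = eta2_coeff 1 (d - b) - eta2_coeff 1 d - cnj (eta2_coeff 1 b)"
proof -
  have "B (\<rho> 1 d \<eta>2) (\<rho> 1 b \<eta>2) = B (\<rho> 1 b (\<rho> 1 (d - b) \<eta>2)) (\<rho> 1 b \<eta>2)"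
    using rho_mult[of 1 1 b "d - b"] by simp
  also have "\<dots> = eta2_coeff 1 (d - b)"
    unfolding eta2_coeff_def using B_rho_rho[of 1] by simp
  finally have "B (\<rho> 1 d \<eta>2) (\<rho> 1 b \<eta>2) = eta2_coeff 1 (d - b)" .
  moreover have "B (\<rho> 1 d \<eta>2) (\<rho> 1 b \<eta>2) =
                   eta2_coeff 1 d + cnj (eta2_coeff 1 b) + B (cocycle 1 d) (cocycle 1 b)"
    using B_hyperbolic_coords[OF cocycle_in_perp cocycle_in_perp, where q = 1 and q' = 1]
    unfolding rho_unipotent_eta2 by (simp add: cscale_one)
  ultimately show ?thesis by (simp add: algebra_simps)
qed

lemma Im_B_cocycle_cocycle: "Im (B (cocycle 1 d) (cocycle 1 b)) = Delta 1 (d - b) - Delta 1 d + Delta 1 b"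
  unfolding B_cocycle_cocycle Delta_def by simp

lemma Re_B_cocycle_cocycle:
  "Re (B (cocycle 1 d) (cocycle 1 b)) =
     - Re (B (cocycle 1 (d - b)) (cocycle 1 (d - b))) / 2 + Re (B (cocycle 1 b) (cocycle 1 b)) / 2
     + Re (B (cocycle 1 d) (cocycle 1 d)) / 2"
proof -
  have "Re (B (cocycle 1 d) (cocycle 1 b)) =
          Re (eta2_coeff 1 (d - b)) - Re (eta2_coeff 1 d) - Re (eta2_coeff 1 b)"
    using B_cocycle_cocycle[of d b] by simp
  then show ?thesis
    using Re_eta2_coeff[of 1 "d - b"] Re_eta2_coeff[of 1 d] Re_eta2_coeff[of 1 b] chi_one by simp
qed

lemma Delta_odd: "Delta 1 (- b) = - Delta 1 b"
  using Im_B_cocycle_cocycle[of 0 b] Delta_diagonal[of 1] cocycle_diagonal[of 1] by simp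

text \<open>The function t \<mapsto> |B(\<rho>(1,t) y, y)| is continuous and invariant under t \<mapsto> l^2 t, hence
  constant; the equality case of the reverse Cauchy-Schwarz inequality then puts \<rho>(1,b) y on the
  line of y.\<close>
lemma fixes_line_unipotent:
  assumes y: "Re (B y y) > 0" and fix_diag: "\<forall>l>0. R (gP l 0) y \<in> cline y"
  shows "R (gP 1 b) y \<in> cline y"
proof -
  define f where "f t = cmod (B (\<rho> 1 t y) y)" for t
  have scaling: "f (l\<^sup>2 * t) = f t" if l: "l > 0" for l t
  proof -
    have l': "1/l > 0" using l by simp
    obtain \<mu> where \<mu>: "\<rho> (1/l) 0 y = \<mu> *\<^sub>C y"
      using fix_diag l' rho_mem_cline_iff[OF l'] unfolding cline_def by blast
    have "B y y = B (\<rho> (1/l) 0 y) (\<rho> (1/l) 0 y)"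
      using B_rho_rho[OF l'] by simp
    also have "\<dots> = (\<mu> * cnj \<mu>) * B y y"
      unfolding \<mu> by (simp add: B_simps)
    moreover have "B y y \<noteq> 0"
      using y by auto
    ultimately have \<mu>_unimodular: "\<mu> * cnj \<mu> = 1"
      by simp
    have "\<rho> 1 (l\<^sup>2 * t) y = \<rho> l 0 (\<rho> 1 t (\<mu> *\<^sub>C y))"
      using rho_mult[OF l, of 1 0 t] rho_mult[OF l l', of "l * t" 0 y] l \<mu>
      by (simp add: power2_eq_square mult.commute mult.left_commute)
    moreover have "y = \<rho> l 0 (\<mu> *\<^sub>C y)"
      using rho_mult[OF l l', of 0 0 y] rho_one l \<mu> by simp
    ultimately have "B (\<rho> 1 (l\<^sup>2 * t) y) y = B (\<rho> l 0 (\<rho> 1 t (\<mu> *\<^sub>C y))) (\<rho> l 0 (\<mu> *\<^sub>C y))"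
      by simp
    also have "\<dots> = B (\<rho> 1 t (\<mu> *\<^sub>C y)) (\<mu> *\<^sub>C y)"
      by (rule B_rho_rho[OF l])
    also have "\<dots> = (\<mu> * cnj \<mu>) * B (\<rho> 1 t y) y"
      by (simp add: rho_cscale B_simps)
    finally show ?thesis
      unfolding f_def using \<mu>_unimodular by simp
  qed
  have "continuous_on UNIV f"
    unfolding f_def by (intro continuous_intros continuous_on_B_left[OF form] continuous_on_rho_unipotent)
  moreover have "((\<lambda>l. l\<^sup>2 * b) \<longlongrightarrow> 0) (at_right 0)"
    by (auto intro!: tendsto_eq_intros)
  ultimately have "((\<lambda>l. f (l\<^sup>2 * b)) \<longlongrightarrow> f 0) (at_right 0)"
    by (intro isCont_tendsto_compose[of 0 f]) (auto simp: continuous_on_eq_continuous_at)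
  moreover have "\<forall>\<^sub>F l in at_right 0. f (l\<^sup>2 * b) = f b"
    using eventually_at_right_less[of 0] by eventually_elim (simp add: scaling)
  ultimately have "((\<lambda>l. f b) \<longlongrightarrow> f 0) (at_right (0::real))"
    by (simp add: tendsto_cong)
  then have "f b = f 0"
    using tendsto_const_iff trivial_limit_at_right_real by blast
  then have "cmod (B (\<rho> 1 b y) y) = Re (B y y)"
    unfolding f_def rho_one using y B_self_real[of y] by (metis abs_of_pos norm_of_real)
  then have "\<rho> 1 b y \<in> cline y"
    using sig_1_infty_form_mem_cline[OF form y] B_rho_rho[of 1] by simp
  then show ?thesis
    using rho_mem_cline_iff by simp
qed

lemma fixes_line_P:
  assumes y: "Re (B y y) > 0" and fix_diag: "\<forall>l>0. R (gP l 0) y \<in> cline y" and l: "l > 0"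
  shows "R (gP l b) y \<in> cline y"
proof -
  have "R (gP 1 (b * l) ** gP l 0) y \<in> cline y"
    using proj_rep_fix_mult[OF rep gP_SU11 gP_SU11 fixes_line_unipotent[OF y fix_diag]] fix_diag l
    by simp
  then show ?thesis
    using gP_mult[of 1 "b*l" l 0] l by simp
qed

text \<open>If the diagonal subgroup fixed the line of a positive vector x, so would all of P, and then
  the Weyl element would carry it to a line fixed by all of SU(1,1), contradicting irreducibility.\<close>
lemma not_fixes_line_diagonal:
  assumes x: "Re (B x x) > 0"
  shows "\<not> (\<forall>l>0. R (gP l 0) x \<in> cline x)"
proof
  assume fix_diag: "\<forall>l>0. R (gP l 0) x \<in> cline x"
  define y where "y = R weyl x"
  have yy: "B y y = B x x"
    unfolding y_def using proj_rep_unitary[OF rep weyl_SU11] unitaryB_B by blast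
  have fix_x: "R (gP l b) x \<in> cline x" if "l > 0" for l b
    using fixes_line_P[OF x fix_diag that] .
  have "\<forall>l>0. R (gP l 0) y \<in> cline y"
    unfolding y_def
    using proj_rep_fix_conj[OF rep gP_SU11 gP_SU11 weyl_SU11 gP_mult_weyl fix_x] by simp
  then have "R (gP l b) y \<in> cline y" if "l > 0" for l b
    using fixes_line_P[OF _ _ that] x yy by simp
  moreover have "R (lower_unipotent c) y \<in> cline y" for c
    unfolding y_def
    using proj_rep_fix_conj[OF rep lower_unipotent_SU11 gP_SU11 weyl_SU11 lower_unipotent_mult_weyl fix_x]
    by simp
  ultimately have "\<forall>g\<in>SU11. R g y \<in> cline y"
    using proj_rep_fix_SU11[OF rep] by blast
  moreover have "y \<noteq> 0" "Re (B y y) \<ge> 0"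
    using x yy by auto
  ultimately show False
    using irred unfolding irreducible_rep_def by blast
qed

lemma chi_nontrivial: "\<exists>l>0. chi l \<noteq> 1"
proof (rule ccontr)
  assume "\<not> (\<exists>l>0. chi l \<noteq> 1)"
  then have "\<rho> l 0 (\<eta>1 + \<eta>2) = \<eta>1 + \<eta>2" if "l > 0" for l
    using that by (simp add: rho_add rho_eta1 rho_eta2_diagonal cscale_one)
  then have "\<forall>l>0. R (gP l 0) (\<eta>1 + \<eta>2) \<in> cline (\<eta>1 + \<eta>2)"
    using rho_mem_cline_iff cline_cscale_iff[of 1] unfolding cline_def by (metis cscale_one rangeI)
  moreover have "Re (B (\<eta>1 + \<eta>2) (\<eta>1 + \<eta>2)) > 0"
    by (simp add: B_simps B_eta)
  ultimately show False
    using not_fixes_line_diagonal by blast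
qed

lemma bij_betw_chi: "bij_betw chi {0<..} {0<..}"
proof -
  define a where "a = ln (chi (exp 1))"
  have chi_eq: "chi l = l powr a" if "l > 0" for l
    unfolding a_def using continuous_multiplicative_eq_powr[OF chi_pos chi_mult continuous_on_chi that] .
  obtain l where l: "l > 0" "chi l \<noteq> 1"
    using chi_nontrivial by blast
  then have "a \<noteq> 0"
    using chi_eq[OF l(1)] by auto
  then have "bij_betw (\<lambda>l. l powr a) {0<..} {0<..}"
    by (rule bij_betw_powr)
  moreover have "bij_betw chi {0<..} {0<..} \<longleftrightarrow> bij_betw (\<lambda>l. l powr a) {0<..} {0<..}"
    by (rule bij_betw_cong) (simp add: chi_eq)
  ultimately show ?thesis by simp
qed

end

theorem mainTheorem8:
  fixes B :: "'h::{cnormed_vector,banach} \<Rightarrow> 'h \<Rightarrow> complex"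
    and R :: "complex^2^2 \<Rightarrow> 'h \<Rightarrow> 'h"
    and L :: "complex^2^2 \<Rightarrow> 'h \<Rightarrow> 'h"
    and \<eta>1 \<eta>2 :: 'h
  assumes form: "sig_1_infty_form B"
    and rep: "proj_rep B R"
    and irred: "irreducible_rep B R"
    and eta_iso: "\<eta>1 \<noteq> 0" "\<eta>2 \<noteq> 0" "B \<eta>1 \<eta>1 = 0" "B \<eta>2 \<eta>2 = 0" "B \<eta>1 \<eta>2 = 1"
    and eta1_fix: "\<forall>g\<in>Pgrp. R g \<eta>1 \<in> cline \<eta>1"
    and eta2_fix: "\<forall>l>0. R (gP l 0) \<eta>2 \<in> cline \<eta>2"
    and lift_unitary: "\<forall>g\<in>Pgrp. unitaryB B (L g)"
    and lift_proj: "\<forall>g\<in>Pgrp. \<exists>\<theta>. cmod \<theta> = 1 \<and> L g = (\<lambda>v. \<theta> *\<^sub>C R g v)"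
    and lift_hom: "\<forall>g\<in>Pgrp. \<forall>h\<in>Pgrp. L (g ** h) = L g \<circ> L h"
    and lift_cont: "\<forall>v. continuous_on Pgrp (\<lambda>g. L g v)"
    and lift_norm: "\<forall>g\<in>Pgrp. Im (B (L g \<eta>1) \<eta>2) = 0 \<and> Re (B (L g \<eta>1) \<eta>2) > 0"
  defines "E \<equiv> {u. B u \<eta>1 = 0 \<and> B u \<eta>2 = 0}"
  shows "\<exists>(chi :: real \<Rightarrow> real) (\<Delta> :: real \<Rightarrow> real \<Rightarrow> real) (c :: real \<Rightarrow> real \<Rightarrow> 'h)
            (\<pi> :: real \<Rightarrow> real \<Rightarrow> 'h \<Rightarrow> 'h).
     \<comment> \<open>chi is a continuous isomorphism of the multiplicative group R_{>0}\<close>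
     (\<forall>x>0. chi x > 0) \<and> (\<forall>x>0. \<forall>y>0. chi (x * y) = chi x * chi y) \<and>
     bij_betw chi {0<..} {0<..} \<and> continuous_on {0<..} chi \<and>
     \<comment> \<open>matrix form of L (g(l,b)) with respect to C eta1 (+) C eta2 (+) E\<close>
     (\<forall>l>0. \<forall>b.
        L (gP l b) \<eta>1 = complex_of_real (chi l) *\<^sub>C \<eta>1 \<and>
        L (gP l b) \<eta>2 =
          (complex_of_real (- chi l * Re (B (c l b) (c l b)) / 2) + \<i> * complex_of_real (\<Delta> l b)) *\<^sub>C \<eta>1
          + complex_of_real (1 / chi l) *\<^sub>C \<eta>2 + c l b \<and>
        (\<forall>u\<in>E. L (gP l b) u =
           (- complex_of_real (chi l) * B (\<pi> l b u) (c l b)) *\<^sub>C \<eta>1 + \<pi> l b u)) \<and>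
     \<comment> \<open>(1)\<close>
     continuous_on ({0<..} \<times> UNIV) (\<lambda>p. \<Delta> (fst p) (snd p)) \<and>
     \<comment> \<open>(2)\<close>
     (\<forall>l>0. \<forall>b. c l b \<in> E) \<and>
     continuous_on ({0<..} \<times> UNIV) (\<lambda>p. c (fst p) (snd p)) \<and>
     \<comment> \<open>(3)\<close>
     (\<forall>l>0. \<forall>b. unitary_on B E (\<pi> l b)) \<and>
     (\<forall>l b l' b' l'' b''. l > 0 \<longrightarrow> l' > 0 \<longrightarrow> l'' > 0 \<longrightarrow>
        gP l b ** gP l' b' = gP l'' b'' \<longrightarrow> (\<forall>u\<in>E. \<pi> l b (\<pi> l' b' u) = \<pi> l'' b'' u)) \<and>
     (\<forall>u\<in>E. continuous_on ({0<..} \<times> UNIV) (\<lambda>p. \<pi> (fst p) (snd p) u)) \<and>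
     \<comment> \<open>(4)\<close>
     (\<forall>b d. c 1 (b + d) = c 1 b + \<pi> 1 b (c 1 d)) \<and>
     \<comment> \<open>(5)\<close>
     (\<forall>l>0. \<Delta> l 0 = 0 \<and> c l 0 = 0) \<and>
     \<comment> \<open>(6)\<close>
     (\<forall>l>0. \<forall>b. chi l *\<^sub>R \<pi> l 0 (c 1 b) = c 1 (l\<^sup>2 * b)) \<and>
     \<comment> \<open>(7)\<close>
     (\<forall>l>0. \<forall>b. (chi l)\<^sup>2 * \<Delta> 1 b = \<Delta> 1 (l\<^sup>2 * b)) \<and>
     \<comment> \<open>(8)\<close>
     (\<forall>b. \<Delta> 1 (- b) = - \<Delta> 1 b) \<and>
     \<comment> \<open>(9)\<close>
     (\<forall>b d. Im (B (c 1 d) (c 1 b)) = \<Delta> 1 (d - b) - \<Delta> 1 d + \<Delta> 1 b) \<and>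
     \<comment> \<open>(10)\<close>
     (\<forall>b d. Re (B (c 1 d) (c 1 b)) =
        - Re (B (c 1 (d - b)) (c 1 (d - b))) / 2 + Re (B (c 1 b) (c 1 b)) / 2
        + Re (B (c 1 d) (c 1 d)) / 2)"
proof -
  interpret lifted_rep B \<eta>1 \<eta>2 R L
    using form rep irred eta_iso(3-5) eta1_fix eta2_fix lift_unitary lift_proj lift_hom lift_cont lift_norm
    by (simp add: lifted_rep_def lifted_rep_axioms_def hyperbolic_pair_def hyperbolic_pair_axioms_def
        sig_1_infty_form_hermitian)
  have E: "E = eta_perp"
    unfolding E_def eta_perp_def ..
  show ?thesis
    unfolding E
    by (intro exI[of _ chi] exI[of _ Delta] exI[of _ cocycle] exI[of _ unitary_part]
        conjI allI impI ballI)
      (assumption | rule chi_pos chi_mult bij_betw_chi continuous_on_chi rho_eta1 rho_eta2 rho_perp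
        continuous_on_Delta cocycle_in_perp continuous_on_cocycle unitary_on_unitary_part unitary_part_hom
        continuous_on_unitary_part cocycle_add Delta_diagonal cocycle_diagonal chi_unitary_part_cocycle
        chi_square_Delta Delta_odd Im_B_cocycle_cocycle Re_B_cocycle_cocycle)+
qed

end
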